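(* Let $p\ge1$ be a real number which is not an even integer, and let $L_p=L_p(\Omega,\mu)$ be infinite-dimensional (for some measure space). Then there is no $T^p$-smooth bump function on $L_p$.
   Context: For a real number $p\ge1$, a function $f:X\to\mathbb{R}$ on a Banach space $X$ has a Taylor expansion of order $p$ at $x\in X$ if there is a continuous polynomial $P$ on $X$ of degree at most $[p]$ with $|f(x+h)-f(x)-P(h)|=o(\|h\|^p)$ as $h\to0$; $f$ is $T^p$-smooth if it has a Taylor expansion of order $p$ at every point. A bump function is a real-valued function with bounded nonempty support. *)

theory Defs
  imports "HOL-Analysis.Analysis"
begin

text \<open>The k arguments are encoded
  as a function from nat, and A depends only on the arguments with index below k.\<close>
definition cont_homog_poly :: "nat \<Rightarrow> ('a::real_normed_vector \<Rightarrow> real) \<Rightarrow> bool" where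
  "cont_homog_poly k Q \<longleftrightarrow>
     (\<exists>A :: (nat \<Rightarrow> 'a) \<Rightarrow> real.
        (\<forall>v w. (\<forall>i<k. v i = w i) \<longrightarrow> A v = A w) \<and>
        (\<forall>v i a x y. i < k \<longrightarrow>
            A (v(i := a *\<^sub>R x + y)) = a * A (v(i := x)) + A (v(i := y))) \<and>
        (\<exists>C. \<forall>v. \<bar>A v\<bar> \<le> C * (\<Prod>i<k. norm (v i))) \<and>
        (\<forall>h. Q h = A (\<lambda>_. h)))"

definition cont_poly_deg_le :: "nat \<Rightarrow> ('a::real_normed_vector \<Rightarrow> real) \<Rightarrow> bool" where
  "cont_poly_deg_le n P \<longleftrightarrow>
     (\<exists>Q :: nat \<Rightarrow> 'a \<Rightarrow> real. (\<forall>k\<le>n. cont_homog_poly k (Q k)) \<and>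
        (\<forall>h. P h = (\<Sum>k\<le>n. Q k h)))"

definition has_taylor_exp :: "real \<Rightarrow> ('a::real_normed_vector \<Rightarrow> real) \<Rightarrow> 'a \<Rightarrow> bool" where
  "has_taylor_exp p f x \<longleftrightarrow>
     (\<exists>P. cont_poly_deg_le (nat \<lfloor>p\<rfloor>) P \<and>
        (\<forall>\<epsilon>>0. \<exists>\<delta>>0. \<forall>h. norm h < \<delta> \<longrightarrow>
            \<bar>f (x + h) - f x - P h\<bar> \<le> \<epsilon> * norm h powr p))"

definition Tp_smooth :: "real \<Rightarrow> ('a::real_normed_vector \<Rightarrow> real) \<Rightarrow> bool" where
  "Tp_smooth p f \<longleftrightarrow> (\<forall>x. has_taylor_exp p f x)"

definition bump_function :: "('a::real_normed_vector \<Rightarrow> real) \<Rightarrow> bool" where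
  "bump_function f \<longleftrightarrow> (\<exists>x. f x \<noteq> 0) \<and> bounded {x. f x \<noteq> 0}"

text \<open>T is a (linear, surjective, isometric) identification of X with L_p(M):
  each x is represented by a measurable p-integrable function T x (up to a.e. equality),
  norm x equals the L_p norm of T x, T is linear modulo null sets, and every
  measurable p-integrable function is a.e. equal to some T x.\<close>
definition Lp_isometry :: "real \<Rightarrow> 'm measure \<Rightarrow> ('a::real_normed_vector \<Rightarrow> 'm \<Rightarrow> real) \<Rightarrow> bool" where
  "Lp_isometry p M T \<longleftrightarrow>
     (\<forall>x. T x \<in> borel_measurable M \<and> integrable M (\<lambda>\<omega>. \<bar>T x \<omega>\<bar> powr p) \<and>
          norm x = (\<integral>\<omega>. \<bar>T x \<omega>\<bar> powr p \<partial>M) powr (1 / p)) \<and>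
     (\<forall>x y. AE \<omega> in M. T (x + y) \<omega> = T x \<omega> + T y \<omega>) \<and>
     (\<forall>c x. AE \<omega> in M. T (c *\<^sub>R x) \<omega> = c * T x \<omega>) \<and>
     (\<forall>g \<in> borel_measurable M. integrable M (\<lambda>\<omega>. \<bar>g \<omega>\<bar> powr p) \<longrightarrow>
          (\<exists>x. AE \<omega> in M. T x \<omega> = g \<omega>))"

definition Lp_space_iso :: "real \<Rightarrow> 'm measure \<Rightarrow> 'a::real_normed_vector itself \<Rightarrow> bool" where
  "Lp_space_iso p M _ \<longleftrightarrow> (\<exists>T :: 'a \<Rightarrow> 'm \<Rightarrow> real. Lp_isometry p M T)"

end

theory Submission
  imports Defs
begin

text \<open>Suppose \<open>f\<close> is a \<open>T\<^sup>p\<close>-smooth bump on \<open>L\<^sub>p\<close>. Since \<open>L\<^sub>p\<close> is infinite-dimensional, it contains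
  a normalised sequence \<open>u\<close> of disjointly supported functions; it spans an isometric copy of
  \<open>\<ell>\<^sub>p\<close> and satisfies \<open>\<parallel>w + s u\<^sub>n\<parallel>\<^sup>p \<rightarrow> \<parallel>w\<parallel>\<^sup>p + \<bar>s\<bar>\<^sup>p\<close>. By Pitt's theorem, homogeneous polynomials of
  degree \<open>k < p\<close> tend to \<open>0\<close> along \<open>u\<close>. In the symmetric second difference
  \<open>f (x + t u\<^sub>n) + f (x - t u\<^sub>n) - 2 f x\<close> the odd terms of the Taylor polynomial cancel, and if \<open>p\<close>
  is not an even integer the even ones have degree below \<open>p\<close>; so this difference is \<open>o(t\<^sup>p)\<close>
  for large \<open>n\<close>. A variational principle applied to \<open>f - \<epsilon> \<parallel>_\<parallel>\<^sup>p\<close> produces a point that is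
  almost maximal for \<open>\<parallel>_\<parallel>\<^sup>p\<close> among the points above it, but moving from it by \<open>\<plusminus>t u\<^sub>n\<close> gains
  \<open>t\<^sup>p\<close> in \<open>\<parallel>_\<parallel>\<^sup>p\<close> at almost no cost in \<open>f\<close>.\<close>

section \<open>Multilinear forms and homogeneous polynomials\<close>

definition multilinear_form :: "nat \<Rightarrow> ((nat \<Rightarrow> 'a::real_vector) \<Rightarrow> real) \<Rightarrow> bool" where
  "multilinear_form k A \<longleftrightarrow> (\<forall>v w. (\<forall>i<k. v i = w i) \<longrightarrow> A v = A w) \<and>
     (\<forall>v i a x y. i < k \<longrightarrow> A (v(i := a *\<^sub>R x + y)) = a * A (v(i := x)) + A (v(i := y)))"

lemma multilinear_form_cong:
  "multilinear_form k A \<Longrightarrow> (\<And>i. i < k \<Longrightarrow> v i = w i) \<Longrightarrow> A v = A w"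
  unfolding multilinear_form_def by blast

lemma multilinear_form_linear:
  "multilinear_form k A \<Longrightarrow> i < k \<Longrightarrow> A (v(i := a *\<^sub>R x + y)) = a * A (v(i := x)) + A (v(i := y))"
  unfolding multilinear_form_def by blast

lemma multilinear_form_zero:
  assumes "multilinear_form k A" "i < k" shows "A (v(i := 0)) = 0"
  using multilinear_form_linear[OF assms, of v 1 0 0] by simp

lemma multilinear_form_scaleR:
  assumes "multilinear_form k A" "i < k" shows "A (v(i := a *\<^sub>R x)) = a * A (v(i := x))"
  using multilinear_form_linear[OF assms, of v a x 0] multilinear_form_zero[OF assms, of v] by simp

lemma multilinear_form_add:
  assumes "multilinear_form k A" "i < k" shows "A (v(i := x + y)) = A (v(i := x)) + A (v(i := y))"
  using multilinear_form_linear[OF assms, of v 1 x y] by simp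

lemma multilinear_form_sum:
  assumes "multilinear_form k A" "i < k" "finite F"
  shows "A (v(i := (\<Sum>j\<in>F. g j))) = (\<Sum>j\<in>F. A (v(i := g j)))"
  using assms(3)
proof induction
  case empty
  show ?case using multilinear_form_zero[OF assms(1,2)] by (simp only: sum.empty)
next
  case (insert j F)
  have "A (v(i := (\<Sum>j\<in>insert j F. g j))) = A (v(i := g j + (\<Sum>j\<in>F. g j)))"
    by (simp only: sum.insert[OF insert(1,2)])
  also have "\<dots> = A (v(i := g j)) + A (v(i := (\<Sum>j\<in>F. g j)))"
    by (rule multilinear_form_add[OF assms(1,2)])
  also have "\<dots> = (\<Sum>j\<in>insert j F. A (v(i := g j)))"
    using insert(3) by (simp only: sum.insert[OF insert(1,2)])
  finally show ?case .
qed

lemma multilinear_form_uminus: "multilinear_form k A \<Longrightarrow> multilinear_form k (\<lambda>v. - A v)"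
  unfolding multilinear_form_def by auto

lemma multilinear_form_fix_last:
  assumes "multilinear_form (Suc k) A"
  shows "multilinear_form k (\<lambda>v. A (v(k := y)))"
  unfolding multilinear_form_def
proof (intro conjI allI impI)
  fix v w :: "nat \<Rightarrow> 'a" assume "\<forall>i<k. v i = w i"
  then show "A (v(k := y)) = A (w(k := y))"
    by (intro multilinear_form_cong[OF assms]) auto
next
  fix v i a x z assume "i < k"
  then show "A ((v(i := a *\<^sub>R x + z))(k := y)) = a * A ((v(i := x))(k := y)) + A ((v(i := z))(k := y))"
    using multilinear_form_linear[OF assms, of i "v(k := y)"] by (simp add: fun_upd_twist)
qed

lemma multilinear_form_diagonal_scaleR:
  assumes "multilinear_form k A"
  shows "A (\<lambda>_. a *\<^sub>R h) = a ^ k * A (\<lambda>_. h)"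
proof -
  define v :: "nat \<Rightarrow> nat \<Rightarrow> 'a" where "v m = (\<lambda>r. if r < m then a *\<^sub>R h else h)" for m
  have "m \<le> k \<Longrightarrow> A (v m) = a ^ m * A (\<lambda>_. h)" for m
  proof (induction m)
    case (Suc m)
    have "v (Suc m) = (v m)(m := a *\<^sub>R h)" and "v m = (v m)(m := h)"
      by (auto simp: v_def fun_eq_iff)
    then have "A (v (Suc m)) = a * A (v m)"
      using multilinear_form_scaleR[OF assms, of m "v m" a h] Suc.prems by simp
    then show ?case using Suc by simp
  qed (simp add: v_def)
  from this[of k] show ?thesis
    using multilinear_form_cong[OF assms, of "v k" "\<lambda>_. a *\<^sub>R h"] by (simp add: v_def)
qed

lemma cont_homog_poly_iff:
  "cont_homog_poly k Q \<longleftrightarrow> (\<exists>A C. multilinear_form k A \<and>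
     (\<forall>v. \<bar>A v\<bar> \<le> C * (\<Prod>i<k. norm (v i))) \<and> (\<forall>h. Q h = A (\<lambda>_. h)))"
  unfolding cont_homog_poly_def multilinear_form_def by blast

lemma cont_homog_poly_scaleR: "cont_homog_poly k Q \<Longrightarrow> Q (a *\<^sub>R h) = a ^ k * Q h"
  unfolding cont_homog_poly_iff by (auto simp: multilinear_form_diagonal_scaleR)

lemma cont_homog_poly_zero: "cont_homog_poly k Q \<Longrightarrow> 0 < k \<Longrightarrow> Q 0 = 0"
  using cont_homog_poly_scaleR[of k Q 0 0] by (simp add: zero_power)

lemma cont_homog_poly_0_const: "cont_homog_poly 0 Q \<Longrightarrow> Q h = Q 0"
  using cont_homog_poly_scaleR[of 0 Q 0 h] by simp

lemma cont_homog_poly_bound: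
  assumes "cont_homog_poly k Q" obtains C where "\<And>h. \<bar>Q h\<bar> \<le> C * norm h ^ k"
proof -
  obtain A C where A: "\<And>v. \<bar>A v\<bar> \<le> C * (\<Prod>i<k. norm (v i))" and Q: "\<And>h. Q h = A (\<lambda>_. h)"
    using assms unfolding cont_homog_poly_iff by blast
  have "\<bar>Q h\<bar> \<le> C * norm h ^ k" for h
    using A[of "\<lambda>_. h"] by (simp add: Q prod_constant)
  then show ?thesis by (rule that)
qed

section \<open>Pitt's theorem\<close>

definition isometric_lp_sequence :: "real \<Rightarrow> (nat \<Rightarrow> 'a::real_normed_vector) \<Rightarrow> bool" where
  "isometric_lp_sequence p u \<longleftrightarrow>
     (\<forall>F c. finite F \<longrightarrow> norm (\<Sum>i\<in>F. c i *\<^sub>R u i) powr p = (\<Sum>i\<in>F. \<bar>c i\<bar> powr p))"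

lemma isometric_lp_sequence_norm_signs:
  assumes "isometric_lp_sequence p u" "p > 0" "finite F" "\<And>i. \<bar>c i\<bar> = 1"
  shows "norm (\<Sum>i\<in>F. c i *\<^sub>R u i) = real (card F) powr (1 / p)"
proof -
  have "norm (\<Sum>i\<in>F. c i *\<^sub>R u i) powr p = real (card F)"
    using assms unfolding isometric_lp_sequence_def by simp
  then have "(norm (\<Sum>i\<in>F. c i *\<^sub>R u i) powr p) powr (1 / p) = real (card F) powr (1 / p)"
    by simp
  then show ?thesis using \<open>p > 0\<close> by (simp add: powr_powr)
qed

lemma isometric_lp_sequence_norm:
  assumes "isometric_lp_sequence p u" "p > 0" shows "norm (u n) = 1"
  using isometric_lp_sequence_norm_signs[OF assms, of "{n}" "\<lambda>_. 1"] by simp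

lemma exists_signs_trace_le_quadratic_form:
  fixes a :: "nat \<Rightarrow> nat \<Rightarrow> real"
  assumes "finite F"
  obtains \<sigma> :: "nat \<Rightarrow> real" where "\<And>i. \<bar>\<sigma> i\<bar> = 1"
    "(\<Sum>i\<in>F. a i i) \<le> (\<Sum>i\<in>F. \<Sum>j\<in>F. \<sigma> i * \<sigma> j * a i j)"
  using assms
proof (induction F arbitrary: thesis rule: finite_induct)
  case empty
  show ?case by (rule empty[of "\<lambda>_. 1"]) simp_all
next
  case (insert x F)
  obtain \<sigma> :: "nat \<Rightarrow> real" where \<sigma>: "\<And>i. \<bar>\<sigma> i\<bar> = 1"
    and IH: "(\<Sum>i\<in>F. a i i) \<le> (\<Sum>i\<in>F. \<Sum>j\<in>F. \<sigma> i * \<sigma> j * a i j)"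
    using insert.IH by blast
  \<comment> \<open>choose the new sign so that the cross terms with the old indices are nonnegative\<close>
  define c where "c = (\<Sum>j\<in>F. \<sigma> j * (a x j + a j x))"
  define s :: real where "s = (if c \<ge> 0 then 1 else -1)"
  define \<sigma>' where "\<sigma>' = \<sigma>(x := s)"
  have \<sigma>'F: "\<And>j. j \<in> F \<Longrightarrow> \<sigma>' j = \<sigma> j" using insert(2) by (auto simp: \<sigma>'_def)
  have "(\<Sum>i\<in>insert x F. \<Sum>j\<in>insert x F. \<sigma>' i * \<sigma>' j * a i j)
      = (\<Sum>j\<in>insert x F. \<sigma>' x * \<sigma>' j * a x j) + (\<Sum>i\<in>F. \<Sum>j\<in>insert x F. \<sigma>' i * \<sigma>' j * a i j)"
    using insert(1,2) by simp
  also have "(\<Sum>j\<in>insert x F. \<sigma>' x * \<sigma>' j * a x j) = s * s * a x x + (\<Sum>j\<in>F. s * \<sigma> j * a x j)"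
    using insert(1,2) \<sigma>'F by (simp add: \<sigma>'_def)
  also have "(\<Sum>i\<in>F. \<Sum>j\<in>insert x F. \<sigma>' i * \<sigma>' j * a i j)
      = (\<Sum>i\<in>F. \<sigma> i * s * a i x) + (\<Sum>i\<in>F. \<Sum>j\<in>F. \<sigma> i * \<sigma> j * a i j)"
    using insert(1,2) \<sigma>'F by (simp add: sum.distrib \<sigma>'_def)
  finally have "(\<Sum>i\<in>insert x F. \<Sum>j\<in>insert x F. \<sigma>' i * \<sigma>' j * a i j)
      = s * s * a x x + s * c + (\<Sum>i\<in>F. \<Sum>j\<in>F. \<sigma> i * \<sigma> j * a i j)"
    by (simp add: c_def sum_distrib_left sum.distrib algebra_simps)
  moreover have "s * s = 1" "s * c \<ge> 0" by (auto simp: s_def)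
  ultimately have "(\<Sum>i\<in>insert x F. a i i) \<le> (\<Sum>i\<in>insert x F. \<Sum>j\<in>insert x F. \<sigma>' i * \<sigma>' j * a i j)"
    using IH insert(1,2) by simp
  moreover have "\<bar>\<sigma>' i\<bar> = 1" for i using \<sigma> by (simp add: \<sigma>'_def s_def)
  ultimately show ?case using insert.prems by blast
qed

lemma linear_form_signed_sum_le:
  assumes u: "isometric_lp_sequence p u" and p: "p > 0" and F: "finite F"
    and A: "multilinear_form (Suc 0) A" "\<And>v. \<bar>A v\<bar> \<le> C * (\<Prod>r<Suc 0. norm (v r))"
    and \<tau>: "\<And>i. \<bar>\<tau> i\<bar> = 1"
  shows "(\<Sum>i\<in>F. A (\<lambda>_. \<tau> i *\<^sub>R u i)) \<le> C * real (card F) powr (1 / p)"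
proof -
  define y where "y = (\<Sum>i\<in>F. \<tau> i *\<^sub>R u i)"
  define v :: "nat \<Rightarrow> 'a" where "v = (\<lambda>_. 0)"
  have "A (\<lambda>_. \<tau> i *\<^sub>R u i) = A (v(0 := \<tau> i *\<^sub>R u i))" for i
    by (rule multilinear_form_cong[OF A(1)]) simp
  then have "(\<Sum>i\<in>F. A (\<lambda>_. \<tau> i *\<^sub>R u i)) = A (v(0 := y))"
    unfolding y_def by (simp only:) (rule multilinear_form_sum[OF A(1) _ F, symmetric], simp)
  also have "\<dots> \<le> C * norm y"
  proof -
    have "(\<Prod>r<Suc 0. norm ((v(0 := y)) r)) = norm y" by simp
    then have "\<bar>A (v(0 := y))\<bar> \<le> C * norm y" using A(2)[of "v(0 := y)"] by (simp only:)
    then show ?thesis by linarith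
  qed
  also have "norm y = real (card F) powr (1 / p)"
    unfolding y_def by (rule isometric_lp_sequence_norm_signs[OF u p F \<tau>])
  finally show ?thesis .
qed

lemma multilinear_form_signed_row_sum:
  assumes A: "multilinear_form (Suc (Suc m)) A" and F: "finite F"
  shows "(\<Sum>j\<in>F. \<sigma> i * \<sigma> j * A ((\<lambda>r. \<tau> r i *\<^sub>R u i)(Suc m := \<tau> (Suc m) j *\<^sub>R u j)))
    = A ((\<lambda>r. (if r = 0 then \<sigma> i * \<tau> 0 i else \<tau> r i) *\<^sub>R u i)
          (Suc m := (\<Sum>j\<in>F. (\<sigma> j * \<tau> (Suc m) j) *\<^sub>R u j)))"
proof -
  define L where "L = Suc m"
  have L: "L < Suc (Suc m)" "0 < Suc (Suc m)" "L \<noteq> 0" by (auto simp: L_def)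
  define w where "w = (\<lambda>r. \<tau> r i *\<^sub>R u i)(L := (\<Sum>j\<in>F. (\<sigma> j * \<tau> L j) *\<^sub>R u j))"
  have "(\<Sum>j\<in>F. \<sigma> j * A ((\<lambda>r. \<tau> r i *\<^sub>R u i)(L := \<tau> L j *\<^sub>R u j)))
      = (\<Sum>j\<in>F. A ((\<lambda>r. \<tau> r i *\<^sub>R u i)(L := (\<sigma> j * \<tau> L j) *\<^sub>R u j)))"
    unfolding scaleR_scaleR[symmetric] by (simp only: multilinear_form_scaleR[OF A L(1)])
  also have "\<dots> = A w"
    unfolding w_def by (rule multilinear_form_sum[OF A L(1) F, symmetric])
  also have "\<sigma> i * A w = A (w(0 := \<sigma> i *\<^sub>R w 0))"
    by (subst multilinear_form_scaleR[OF A L(2)]) (simp only: fun_upd_triv)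
  also have "w(0 := \<sigma> i *\<^sub>R w 0) = (\<lambda>r. (if r = 0 then \<sigma> i * \<tau> 0 i else \<tau> r i) *\<^sub>R u i)
      (L := (\<Sum>j\<in>F. (\<sigma> j * \<tau> L j) *\<^sub>R u j))"
    using L(3) by (auto simp: fun_eq_iff w_def)
  finally have "\<sigma> i * (\<Sum>j\<in>F. \<sigma> j * A ((\<lambda>r. \<tau> r i *\<^sub>R u i)(L := \<tau> L j *\<^sub>R u j)))
      = A ((\<lambda>r. (if r = 0 then \<sigma> i * \<tau> 0 i else \<tau> r i) *\<^sub>R u i)
          (L := (\<Sum>j\<in>F. (\<sigma> j * \<tau> L j) *\<^sub>R u j)))" .
  then show ?thesis
    unfolding L_def by (simp only: sum_distrib_left mult.assoc)
qed

text \<open>The sign vectors \<open>\<tau>\<close> make the induction on the degree go through: freezing the last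
  argument at a suitably signed sum of the \<open>u j\<close> costs a factor \<open>(card F) powr (1 / p)\<close>.\<close>
lemma multilinear_form_signed_diagonal_sum_le:
  assumes u: "isometric_lp_sequence p u" and p: "p > 0" and F: "finite F"
  shows "multilinear_form (Suc m) A \<Longrightarrow> (\<And>v. \<bar>A v\<bar> \<le> C * (\<Prod>r<Suc m. norm (v r))) \<Longrightarrow>
    (\<And>r i. \<bar>\<tau> r i\<bar> = 1) \<Longrightarrow>
    (\<Sum>i\<in>F. A (\<lambda>r. \<tau> r i *\<^sub>R u i)) \<le> C * real (card F) powr (real (Suc m) / p)"
proof (induction m arbitrary: A C \<tau>)
  case 0
  have "A (\<lambda>r. \<tau> r i *\<^sub>R u i) = A (\<lambda>_. \<tau> 0 i *\<^sub>R u i)" for i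
    by (rule multilinear_form_cong[OF 0(1)]) simp
  then show ?case using linear_form_signed_sum_le[OF u p F 0(1,2) 0(3)] by simp
next
  case (Suc m)
  define L where "L = Suc m"
  define a where "a i j = A ((\<lambda>r. \<tau> r i *\<^sub>R u i)(L := \<tau> L j *\<^sub>R u j))" for i j
  obtain \<sigma> :: "nat \<Rightarrow> real" where \<sigma>: "\<And>i. \<bar>\<sigma> i\<bar> = 1"
    and trace: "(\<Sum>i\<in>F. a i i) \<le> (\<Sum>i\<in>F. \<Sum>j\<in>F. \<sigma> i * \<sigma> j * a i j)"
    using exists_signs_trace_le_quadratic_form[OF F] by blast
  define y where "y = (\<Sum>j\<in>F. (\<sigma> j * \<tau> L j) *\<^sub>R u j)"
  define A' where "A' v = A (v(L := y))" for v
  define \<tau>' where "\<tau>' r i = (if r = 0 then \<sigma> i * \<tau> 0 i else \<tau> r i)" for r i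
  have "norm y = real (card F) powr (1 / p)"
    unfolding y_def using \<sigma> Suc.prems(3)
    by (intro isometric_lp_sequence_norm_signs[OF u p F]) (simp add: abs_mult)
  moreover have "\<bar>A' v\<bar> \<le> (C * norm y) * (\<Prod>r<Suc m. norm (v r))" for v
  proof -
    have "(\<Prod>r<Suc (Suc m). norm ((v(L := y)) r)) = (\<Prod>r<Suc m. norm (v r)) * norm y"
      unfolding prod.lessThan_Suc by (simp add: L_def)
    then show ?thesis
      using Suc.prems(2)[of "v(L := y)"] unfolding A'_def by (simp only: mult_ac)
  qed
  moreover have "\<bar>\<tau>' r i\<bar> = 1" for r i
    using \<sigma> Suc.prems(3) by (simp add: \<tau>'_def abs_mult)
  moreover have "multilinear_form (Suc m) A'"
    unfolding A'_def L_def by (rule multilinear_form_fix_last[OF Suc.prems(1)])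
  ultimately have IH: "(\<Sum>i\<in>F. A' (\<lambda>r. \<tau>' r i *\<^sub>R u i))
      \<le> C * real (card F) powr (1 / p) * real (card F) powr (real (Suc m) / p)"
    using Suc.IH[of A' "C * norm y" \<tau>'] by simp
  have "a i i = A (\<lambda>r. \<tau> r i *\<^sub>R u i)" for i
    unfolding a_def by (metis fun_upd_triv)
  moreover have "(\<Sum>j\<in>F. \<sigma> i * \<sigma> j * a i j) = A' (\<lambda>r. \<tau>' r i *\<^sub>R u i)" for i
    unfolding a_def A'_def \<tau>'_def y_def L_def by (rule multilinear_form_signed_row_sum[OF Suc.prems(1) F])
  ultimately have "(\<Sum>i\<in>F. A (\<lambda>r. \<tau> r i *\<^sub>R u i)) \<le> (\<Sum>i\<in>F. A' (\<lambda>r. \<tau>' r i *\<^sub>R u i))"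
    using trace by simp
  also have "\<dots> \<le> C * real (card F) powr (real (Suc (Suc m)) / p)"
    using IH by (simp add: mult.assoc powr_add[symmetric] add_divide_distrib)
  finally show ?case .
qed

lemma multilinear_form_diagonal_finite_ge:
  assumes u: "isometric_lp_sequence p u" and p: "p > 0"
    and A: "multilinear_form k A" "\<And>v. \<bar>A v\<bar> \<le> C * (\<Prod>r<k. norm (v r))"
    and k: "1 \<le> k" "real k < p" and \<delta>: "\<delta> > 0"
  shows "finite {n. \<delta> \<le> A (\<lambda>_. u n)}"
proof (rule ccontr)
  assume inf: "infinite {n. \<delta> \<le> A (\<lambda>_. u n)}"
  define \<alpha> where "\<alpha> = 1 - real k / p"
  have \<alpha>: "\<alpha> > 0" using k p by (simp add: \<alpha>_def field_simps)
  define X where "X = \<bar>C\<bar> / \<delta> + 1"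
  have X: "X > 0" using \<delta> by (simp add: X_def add_nonneg_pos)
  obtain N :: nat where N: "X powr (1 / \<alpha>) < real N" using reals_Archimedean2 by blast
  then have N0: "real N > 0" using X by (smt (verit) powr_gt_zero)
  have "X = (X powr (1 / \<alpha>)) powr \<alpha>" using \<alpha> X by (simp add: powr_powr)
  also have "\<dots> < real N powr \<alpha>" using N \<alpha> by (intro powr_less_mono2) auto
  finally have NX: "X < real N powr \<alpha>" .
  obtain F where F: "F \<subseteq> {n. \<delta> \<le> A (\<lambda>_. u n)}" "finite F" "card F = N"
    using infinite_arbitrarily_large[OF inf] by blast
  obtain m where m: "k = Suc m" using k(1) by (cases k) auto
  have "real N * \<delta> \<le> (\<Sum>i\<in>F. A (\<lambda>r. (\<lambda>_ _. 1::real) r i *\<^sub>R u i))"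
    using F sum_bounded_below[of F \<delta> "\<lambda>i. A (\<lambda>_. u i)"] by auto
  also have "\<dots> \<le> C * real N powr (real k / p)"
    using multilinear_form_signed_diagonal_sum_le[OF u p F(2), of m A C "\<lambda>_ _. 1"] A F(3) m by simp
  finally have "real N powr (real k / p) * (real N powr \<alpha> * \<delta>) \<le> real N powr (real k / p) * C"
    using N0 by (simp add: \<alpha>_def powr_add[symmetric] mult_ac)
  then have "real N powr \<alpha> * \<delta> \<le> C" using N0 by simp
  moreover have "X * \<delta> < real N powr \<alpha> * \<delta>" using NX \<delta> by simp
  moreover have "X * \<delta> = \<bar>C\<bar> + \<delta>" using \<delta> by (simp add: X_def field_simps)
  ultimately show False using \<delta> by linarith
qed

text \<open>A polynomial form of Pitt's theorem that bounded operators \<open>\<ell>\<^sub>p \<rightarrow> \<ell>\<^sub>r\<close> with \<open>r < p\<close> are compact.\<close>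
lemma cont_homog_poly_tendsto_zero:
  assumes u: "isometric_lp_sequence p u" and p: "p > 0"
    and Q: "cont_homog_poly k Q" and k: "1 \<le> k" "real k < p"
  shows "(\<lambda>n. Q (u n)) \<longlonglongrightarrow> 0"
proof -
  obtain A C where A: "multilinear_form k A" "\<forall>v. \<bar>A v\<bar> \<le> C * (\<Prod>i<k. norm (v i))"
    and Q: "\<forall>h. Q h = A (\<lambda>_. h)"
    using Q unfolding cont_homog_poly_iff by blast
  have "finite {n. e \<le> A (\<lambda>_. u n)}" "finite {n. e \<le> - A (\<lambda>_. u n)}" if "e > 0" for e
    using multilinear_form_diagonal_finite_ge[OF u p A(1) _ k that]
      multilinear_form_diagonal_finite_ge[OF u p multilinear_form_uminus[OF A(1)] _ k that] A(2)
    by auto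
  then have "finite {n. \<not> dist (A (\<lambda>_. u n)) 0 < e}" if "e > 0" for e
    using that by (rule_tac finite_subset[of _ "{n. e \<le> A (\<lambda>_. u n)} \<union> {n. e \<le> - A (\<lambda>_. u n)}"]) auto
  then have "(\<lambda>n. A (\<lambda>_. u n)) \<longlonglongrightarrow> 0"
    by (intro tendstoI) (simp add: cofinite_eq_sequentially[symmetric] eventually_cofinite)
  then show ?thesis using Q by simp
qed

section \<open>Second differences of Taylor expansions\<close>

lemma has_taylor_expE:
  fixes f :: "'a::real_normed_vector \<Rightarrow> real"
  assumes "has_taylor_exp p f x"
  obtains Q :: "nat \<Rightarrow> 'a \<Rightarrow> real" where
    "\<And>k. k \<le> nat \<lfloor>p\<rfloor> \<Longrightarrow> cont_homog_poly k (Q k)" "\<And>h. Q 0 h = 0"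
    "\<And>e. e > 0 \<Longrightarrow> \<exists>\<delta>>0. \<forall>h. norm h < \<delta> \<longrightarrow>
        \<bar>f (x + h) - f x - (\<Sum>k\<le>nat \<lfloor>p\<rfloor>. Q k h)\<bar> \<le> e * norm h powr p"
proof -
  obtain P Q where Q: "\<And>k. k \<le> nat \<lfloor>p\<rfloor> \<Longrightarrow> cont_homog_poly k (Q k)"
    and P: "\<And>h. P h = (\<Sum>k\<le>nat \<lfloor>p\<rfloor>. Q k h)"
    and est: "\<And>e. e > 0 \<Longrightarrow> \<exists>\<delta>>0. \<forall>h. norm h < \<delta> \<longrightarrow> \<bar>f (x + h) - f x - P h\<bar> \<le> e * norm h powr p"
    using assms unfolding has_taylor_exp_def cont_poly_deg_le_def by blast
  \<comment> \<open>at \<open>h = 0\<close> the estimate forces \<open>P 0 = 0\<close>, and only the constant term survives in \<open>P 0\<close>\<close>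
  obtain \<delta> where "\<delta> > 0" and est1: "\<forall>h. norm h < \<delta> \<longrightarrow> \<bar>f (x + h) - f x - P h\<bar> \<le> 1 * norm h powr p"
    using est[of 1] by auto
  then have "P 0 = 0" using spec[OF est1, of 0] by simp
  moreover have "P 0 = Q 0 0"
    unfolding P by (subst sum.mono_neutral_right[of "{..nat \<lfloor>p\<rfloor>}" "{0}"])
      (auto intro: cont_homog_poly_zero Q)
  ultimately have Q0: "Q 0 h = 0" for h
    using cont_homog_poly_0_const[of "Q 0" h] Q[of 0] by simp
  show ?thesis by (rule that[OF Q Q0]) (use est P in auto)
qed

lemma has_taylor_exp_isCont:
  fixes f :: "'a::real_normed_vector \<Rightarrow> real"
  assumes p: "p > 0" and T: "has_taylor_exp p f x"
  shows "isCont f x"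
proof -
  obtain Q where Q: "\<And>k. k \<le> nat \<lfloor>p\<rfloor> \<Longrightarrow> cont_homog_poly k (Q k)" and Q0: "\<And>h. Q 0 h = 0"
    and est: "\<And>e. e > 0 \<Longrightarrow> \<exists>\<delta>>0. \<forall>h. norm h < \<delta> \<longrightarrow>
        \<bar>f (x + h) - f x - (\<Sum>k\<le>nat \<lfloor>p\<rfloor>. Q k h)\<bar> \<le> e * norm h powr p"
    using has_taylor_expE[OF T] by blast
  define P where "P h = (\<Sum>k\<le>nat \<lfloor>p\<rfloor>. Q k h)" for h
  have "((\<lambda>h. Q k h) \<longlongrightarrow> 0) (at 0)" if k: "k \<le> nat \<lfloor>p\<rfloor>" for k
  proof (cases "k = 0")
    case False
    obtain C where C: "\<And>h. \<bar>Q k h\<bar> \<le> C * norm h ^ k" using cont_homog_poly_bound[OF Q[OF k]] by blast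
    have "((\<lambda>h::'a. C * norm h ^ k) \<longlongrightarrow> C * norm (0::'a) ^ k) (at 0)"
      by (intro tendsto_intros)
    then have "((\<lambda>h::'a. C * norm h ^ k) \<longlongrightarrow> 0) (at 0)" using False by (simp add: zero_power)
    then show ?thesis by (rule Lim_null_comparison[rotated]) (use C in auto)
  qed (simp add: Q0)
  then have P: "(P \<longlongrightarrow> 0) (at 0)"
    unfolding P_def using tendsto_sum[of "{..nat \<lfloor>p\<rfloor>}" "\<lambda>k h. Q k h" "\<lambda>_. 0"] by simp
  have "((\<lambda>h. f (x + h) - f x - P h) \<longlongrightarrow> 0) (at 0)"
  proof (rule Lim_null_comparison)
    obtain \<delta> where "\<delta> > 0" "\<forall>h. norm h < \<delta> \<longrightarrow> \<bar>f (x + h) - f x - P h\<bar> \<le> 1 * norm h powr p"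
      using est[of 1] unfolding P_def by auto
    then show "eventually (\<lambda>h. norm (f (x + h) - f x - P h) \<le> norm h powr p) (at 0)"
      unfolding eventually_at by (intro exI[of _ \<delta>]) auto
    have "((\<lambda>h::'a. norm h powr p) \<longlongrightarrow> norm (0::'a) powr p) (at 0)"
      using p by (intro tendsto_intros) auto
    then show "((\<lambda>h::'a. norm h powr p) \<longlongrightarrow> 0) (at 0)" by simp
  qed
  from tendsto_add[OF tendsto_add[OF this P] tendsto_const[of "f x"]]
  show ?thesis unfolding isCont_iff by simp
qed

lemma even_less_if_not_even_integer:
  assumes "p \<ge> 0" "\<not> (\<exists>k::int. p = 2 * of_int k)" "k \<le> nat \<lfloor>p\<rfloor>" "even k"
  shows "real k < p"
proof -
  have "real k \<le> p" using assms(1,3) by (simp add: le_nat_iff le_floor_iff)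
  moreover have "real k \<noteq> p"
  proof
    assume "real k = p"
    moreover obtain b where "k = 2 * b" using assms(4) by (elim evenE)
    ultimately have "p = 2 * of_int (int b)" by simp
    then show False using assms(2) by blast
  qed
  ultimately show ?thesis by simp
qed

text \<open>Odd terms of a Taylor polynomial cancel in a symmetric second difference, and the even
  ones have degree below \<open>p\<close> unless \<open>p\<close> is an even integer.\<close>
lemma taylor_poly_second_difference_tendsto_zero:
  assumes u: "isometric_lp_sequence p u" and p: "p > 0" and p_not_even: "\<not> (\<exists>k::int. p = 2 * of_int k)"
    and Q: "\<And>k. k \<le> nat \<lfloor>p\<rfloor> \<Longrightarrow> cont_homog_poly k (Q k)" and Q0: "\<And>h. Q 0 h = 0"
  shows "(\<lambda>n. \<Sum>k\<le>nat \<lfloor>p\<rfloor>. (t ^ k + (-t) ^ k) * Q k (u n)) \<longlonglongrightarrow> 0"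
proof -
  have "(\<lambda>n. (t ^ k + (-t) ^ k) * Q k (u n)) \<longlonglongrightarrow> 0" if k: "k \<le> nat \<lfloor>p\<rfloor>" for k
  proof (cases "even k \<and> k \<noteq> 0")
    case True
    then have "(\<lambda>n. Q k (u n)) \<longlonglongrightarrow> 0"
      using even_less_if_not_even_integer[OF _ p_not_even k] p
      by (intro cont_homog_poly_tendsto_zero[OF u p Q[OF k]]) auto
    then show ?thesis by (rule tendsto_mult_right_zero)
  qed (auto simp: Q0 power_minus_odd)
  then show ?thesis by (intro tendsto_null_sum) auto
qed

lemma has_taylor_exp_second_difference:
  fixes f :: "'a::real_normed_vector \<Rightarrow> real"
  assumes u: "isometric_lp_sequence p u" and p: "p > 0" and p_not_even: "\<not> (\<exists>k::int. p = 2 * of_int k)"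
    and T: "has_taylor_exp p f x" and e: "e > 0"
  shows "\<exists>\<delta>>0. \<forall>t. 0 < t \<and> t < \<delta> \<longrightarrow>
    eventually (\<lambda>n. \<bar>f (x + t *\<^sub>R u n) + f (x + (-t) *\<^sub>R u n) - 2 * f x\<bar> \<le> e * t powr p) sequentially"
proof -
  define d where "d = nat \<lfloor>p\<rfloor>"
  obtain Q where Q: "\<And>k. k \<le> d \<Longrightarrow> cont_homog_poly k (Q k)" and Q0: "\<And>h. Q 0 h = 0"
    and est: "\<And>e. e > 0 \<Longrightarrow> \<exists>\<delta>>0. \<forall>h. norm h < \<delta> \<longrightarrow>
        \<bar>f (x + h) - f x - (\<Sum>k\<le>d. Q k h)\<bar> \<le> e * norm h powr p"
    using has_taylor_expE[OF T] unfolding d_def by blast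
  obtain \<delta> where \<delta>: "\<delta> > 0" and rem: "\<forall>h. norm h < \<delta> \<longrightarrow>
        \<bar>f (x + h) - f x - (\<Sum>k\<le>d. Q k h)\<bar> \<le> (e/3) * norm h powr p"
    using est[of "e/3"] e by auto
  have "eventually (\<lambda>n. \<bar>f (x + t *\<^sub>R u n) + f (x + (-t) *\<^sub>R u n) - 2 * f x\<bar> \<le> e * t powr p) sequentially"
    if t: "0 < t" "t < \<delta>" for t
  proof -
    have "(\<lambda>n. \<Sum>k\<le>d. (t ^ k + (-t) ^ k) * Q k (u n)) \<longlonglongrightarrow> 0"
      unfolding d_def by (rule taylor_poly_second_difference_tendsto_zero[OF u p p_not_even Q[unfolded d_def] Q0])
    moreover have "(e/3) * t powr p > 0" using e t by simp
    ultimately have "eventually (\<lambda>n. \<bar>\<Sum>k\<le>d. (t ^ k + (-t) ^ k) * Q k (u n)\<bar> < (e/3) * t powr p) sequentially"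
      by (rule order_tendstoD(2)[OF tendsto_rabs_zero])
    then show ?thesis
    proof eventually_elim
      case (elim n)
      define P where "P h = (\<Sum>k\<le>d. Q k h)" for h
      have "P (t *\<^sub>R u n) + P ((-t) *\<^sub>R u n) = (\<Sum>k\<le>d. (t ^ k + (-t) ^ k) * Q k (u n))"
        unfolding P_def sum.distrib[symmetric] using cont_homog_poly_scaleR[OF Q]
        by (intro sum.cong) (simp_all add: distrib_right del: scaleR_minus_left)
      moreover have rem_u: "\<bar>f (x + s *\<^sub>R u n) - f x - P (s *\<^sub>R u n)\<bar> \<le> (e/3) * t powr p"
        if "\<bar>s\<bar> = t" for s
        using rem[rule_format, of "s *\<^sub>R u n"] that t(2) isometric_lp_sequence_norm[OF u p]
        by (simp add: P_def)
      moreover note rem_u[OF abs_of_pos[OF t(1)]] rem_u[of "-t", unfolded abs_minus_cancel, OF abs_of_pos[OF t(1)]]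
      moreover have "(e/3) * t powr p = e * t powr p / 3" by simp
      ultimately show ?case using elim by (simp only: abs_le_iff abs_less_iff) linarith
    qed
  qed
  then show ?thesis using \<delta> by blast
qed

section \<open>A variational principle\<close>

lemma exists_near_maximising_sequence:
  fixes S :: "'a \<Rightarrow> 'a set" and N :: "'a \<Rightarrow> real"
  assumes refl: "\<And>x. x \<in> D \<Longrightarrow> x \<in> S x" and sub: "\<And>x. S x \<subseteq> D" and x0: "x0 \<in> D"
  obtains xs where "xs 0 = x0" "\<And>n. xs n \<in> (\<Inter>j\<le>n. S (xs j))"
    "\<And>n. Sup (N ` (\<Inter>j\<le>n. S (xs j))) - (1/2) ^ n < N (xs (Suc n))"
proof -
  define P where "P n st \<longleftrightarrow> (n = 0 \<longrightarrow> st = (x0, S x0)) \<and> fst st \<in> snd st \<and> snd st \<subseteq> D"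
    for n :: nat and st :: "'a \<times> 'a set"
  define Q where "Q n st st' \<longleftrightarrow> fst st' \<in> snd st \<and> Sup (N ` snd st) - (1/2) ^ n < N (fst st') \<and>
      snd st' = snd st \<inter> S (fst st')" for n :: nat and st st' :: "'a \<times> 'a set"
  have "\<exists>st. \<forall>n. P n (st n) \<and> Q n (st n) (st (Suc n))"
  proof (rule dependent_nat_choice)
    show "\<exists>st. P 0 st" using refl[OF x0] sub by (auto simp: P_def)
  next
    fix st n assume "P n st"
    then have "N ` snd st \<noteq> {}" by (auto simp: P_def)
    then obtain x' where x': "x' \<in> snd st" "Sup (N ` snd st) - (1/2) ^ n < N x'"
      using less_cSupD[of "N ` snd st" "Sup (N ` snd st) - (1/2) ^ n"] by auto
    moreover have "x' \<in> S x'" using refl x' \<open>P n st\<close> by (auto simp: P_def)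
    ultimately show "\<exists>st'. P (Suc n) st' \<and> Q n st st'"
      using sub by (intro exI[of _ "(x', snd st \<inter> S x')"]) (auto simp: P_def Q_def)
  qed
  then obtain st where st: "\<And>n. P n (st n)" "\<And>n. Q n (st n) (st (Suc n))" by blast
  have st_Inter: "snd (st n) = (\<Inter>j\<le>n. S (fst (st j)))" for n
  proof (induction n)
    case 0 then show ?case using st(1)[of 0] by (simp add: P_def)
  next
    case (Suc n) then show ?case using st(2)[of n] by (auto simp: Q_def le_Suc_eq)
  qed
  show ?thesis
  proof (rule that[of "\<lambda>n. fst (st n)"])
    show "fst (st 0) = x0" using st(1)[of 0] by (simp add: P_def)
    show "fst (st n) \<in> (\<Inter>j\<le>n. S (fst (st j)))" for n
      using st(1)[of n] by (simp add: P_def st_Inter)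
    show "Sup (N ` (\<Inter>j\<le>n. S (fst (st j)))) - (1/2) ^ n < N (fst (st (Suc n)))" for n
      using st(2)[of n] by (simp add: Q_def st_Inter)
  qed
qed

lemma exists_nested_near_maximisers:
  fixes S :: "'a::complete_space \<Rightarrow> 'a set" and N :: "'a \<Rightarrow> real"
  assumes p: "p > 0" and c: "c > 0"
    and closed: "\<And>x. closed (S x)" and refl: "\<And>x. x \<in> D \<Longrightarrow> x \<in> S x" and sub: "\<And>x. S x \<subseteq> D"
    and bdd: "bdd_above (N ` D)"
    and gain: "\<And>x y. y \<in> S x \<Longrightarrow> c * dist y x powr p \<le> N y - N x"
    and x0: "x0 \<in> D"
  obtains xs xb where "xs 0 = x0" "\<And>j. xb \<in> S (xs j)"
    "\<And>K y. (\<And>j. j \<le> K \<Longrightarrow> y \<in> S (xs j)) \<Longrightarrow> N y \<le> N xb + (1/2) ^ K"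
proof -
  obtain xs where xs0: "xs 0 = x0" and xs_in: "\<And>n. xs n \<in> (\<Inter>j\<le>n. S (xs j))"
    and near_max': "\<And>n. Sup (N ` (\<Inter>j\<le>n. S (xs j))) - (1/2) ^ n < N (xs (Suc n))"
    using exists_near_maximising_sequence[OF refl sub x0] by blast
  define Ss where "Ss n = (\<Inter>j\<le>n. S (xs j))" for n
  have Ss_iff: "y \<in> Ss n \<longleftrightarrow> (\<forall>j\<le>n. y \<in> S (xs j))" for y n by (auto simp: Ss_def)
  have Ss_Suc: "Ss (Suc n) = Ss n \<inter> S (xs (Suc n))" for n by (auto simp: Ss_def le_Suc_eq)
  have near_max: "Sup (N ` Ss n) - (1/2) ^ n < N (xs (Suc n))" for n using near_max' by (simp add: Ss_def)
  have bdd_Ss: "bdd_above (N ` Ss n)" for n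
    using Ss_iff sub by (intro bdd_above_mono[OF bdd]) blast
  have small: "c * dist y (xs (Suc n)) powr p < (1/2) ^ n" if "y \<in> Ss (Suc n)" for y n
  proof -
    have "c * dist y (xs (Suc n)) powr p \<le> N y - N (xs (Suc n))"
      using that gain by (auto simp: Ss_Suc)
    moreover have "N y \<le> Sup (N ` Ss n)"
      using that bdd_Ss by (auto simp: Ss_Suc intro!: cSup_upper)
    ultimately show ?thesis using near_max[of n] by linarith
  qed
  have Ss_closed: "closed (Ss n)" for n using closed by (auto simp: Ss_def)
  have Ss_ne: "Ss n \<noteq> {}" for n using xs_in[of n] by (auto simp: Ss_def)
  have Ss_mono: "Ss n \<subseteq> Ss m" if "m \<le> n" for m n using that by (auto simp: Ss_iff)
  have Ss_diam: "\<exists>n. \<forall>x\<in>Ss n. \<forall>y\<in>Ss n. dist x y < \<epsilon>" if "\<epsilon> > 0" for \<epsilon>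
  proof -
    obtain n where n: "(1/2) ^ n < c * (\<epsilon>/2) powr p"
      using real_arch_pow_inv[of "c * (\<epsilon>/2) powr p" "1/2"] c \<open>\<epsilon> > 0\<close> by auto
    have close: "dist y (xs (Suc n)) < \<epsilon>/2" if "y \<in> Ss (Suc n)" for y
    proof (rule ccontr)
      assume "\<not> dist y (xs (Suc n)) < \<epsilon>/2"
      then have "(\<epsilon>/2) powr p \<le> dist y (xs (Suc n)) powr p"
        using \<open>\<epsilon> > 0\<close> p by (intro powr_mono2) auto
      then show False using small[OF that] n c by (smt (verit) mult_left_mono)
    qed
    have "dist y z < \<epsilon>" if "y \<in> Ss (Suc n)" "z \<in> Ss (Suc n)" for y z
      using close[OF that(1)] close[OF that(2)] dist_triangle2[of y z "xs (Suc n)"] by linarith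
    then show ?thesis by blast
  qed
  obtain xb where xb: "\<And>n. xb \<in> Ss n"
    using decreasing_closed_nest[of Ss, OF Ss_closed Ss_ne Ss_mono Ss_diam] by blast
  show ?thesis
  proof (rule that[of xs xb, OF xs0])
    show "xb \<in> S (xs j)" for j using xb Ss_iff by blast
    fix K y assume "\<And>j. j \<le> K \<Longrightarrow> y \<in> S (xs j)"
    then have "N y \<le> Sup (N ` Ss K)" using bdd_Ss by (auto simp: Ss_iff intro!: cSup_upper)
    moreover have "0 \<le> c * dist xb (xs (Suc K)) powr p" using c by simp
    then have "N (xs (Suc K)) \<le> N xb"
      using gain[of xb "xs (Suc K)"] xb[of "Suc K"] by (auto simp: Ss_Suc)
    ultimately show "N y \<le> N xb + (1/2) ^ K" using near_max[of K] by linarith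
  qed
qed

definition asymptotically_lp_sequence :: "real \<Rightarrow> (nat \<Rightarrow> 'a::real_normed_vector) \<Rightarrow> bool" where
  "asymptotically_lp_sequence p u \<longleftrightarrow>
     (\<forall>w s. (\<lambda>n. norm (w + s *\<^sub>R u n) powr p) \<longlonglongrightarrow> norm w powr p + \<bar>s\<bar> powr p)"

definition variational_le :: "real \<Rightarrow> real \<Rightarrow> ('a::real_normed_vector \<Rightarrow> real) \<Rightarrow> 'a \<Rightarrow> 'a \<Rightarrow> bool" where
  "variational_le p \<epsilon> g x y \<longleftrightarrow>
     - \<epsilon> * (norm y powr p - norm x powr p) \<le> g y - g x \<and>
     (1/2) * norm (y - x) powr p \<le> norm y powr p - norm x powr p"

lemma closed_variational_le_set:
  assumes p: "p > 0" and cont: "continuous_on UNIV g"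
  shows "closed {y. variational_le p \<epsilon> g x y \<and> norm y \<le> R}"
proof -
  have c: "continuous_on UNIV (\<lambda>y::'a. norm (y - z) powr p)" for z
    using p by (intro continuous_on_powr' continuous_intros) auto
  have c0: "continuous_on UNIV (\<lambda>y::'a. norm y powr p)" using c[of 0] by simp
  have "{y. variational_le p \<epsilon> g x y \<and> norm y \<le> R} =
      {y. - \<epsilon> * (norm y powr p - norm x powr p) \<le> g y - g x} \<inter>
      {y. (1/2) * norm (y - x) powr p \<le> norm y powr p - norm x powr p} \<inter> {y. norm y \<le> R}"
    by (auto simp: variational_le_def)
  then show ?thesis
    by (simp only:) (intro closed_Int closed_Collect_le continuous_intros cont c c0)
qed

lemma asymptotically_lp_sequence_eventually_gap:
  assumes u: "asymptotically_lp_sequence p u" and s: "s \<noteq> 0"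
    and gap: "(1/2) * norm (x - z) powr p \<le> norm x powr p - norm z powr p"
  shows "eventually (\<lambda>n. (1/2) * norm (x + s *\<^sub>R u n - z) powr p < norm (x + s *\<^sub>R u n) powr p - norm z powr p)
    sequentially"
proof -
  have "(\<lambda>n. norm (x + s *\<^sub>R u n) powr p - norm z powr p - (1/2) * norm ((x - z) + s *\<^sub>R u n) powr p)
      \<longlonglongrightarrow> (norm x powr p + \<bar>s\<bar> powr p) - norm z powr p - (1/2) * (norm (x - z) powr p + \<bar>s\<bar> powr p)"
    using u unfolding asymptotically_lp_sequence_def by (intro tendsto_intros) auto
  moreover have "(norm x powr p + \<bar>s\<bar> powr p) - norm z powr p - (1/2) * (norm (x - z) powr p + \<bar>s\<bar> powr p) > 0"
  proof -
    have "\<bar>s\<bar> powr p > 0" using s by simp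
    moreover have "(norm x powr p + \<bar>s\<bar> powr p) - norm z powr p - (1/2) * (norm (x - z) powr p + \<bar>s\<bar> powr p)
        = (norm x powr p - norm z powr p - (1/2) * norm (x - z) powr p) + \<bar>s\<bar> powr p / 2"
      by (simp add: algebra_simps)
    ultimately show ?thesis using gap by linarith
  qed
  ultimately show ?thesis
    by (rule order_tendstoD(1)[THEN eventually_mono]) (simp add: algebra_simps)
qed

text \<open>Moving from \<open>x\<close> by \<open>\<plusminus>t u n\<close> for large \<open>n\<close> gains \<open>t powr p\<close> in \<open>norm _ powr p\<close> while staying
  above every point below \<open>x\<close>; if \<open>g\<close> has small second differences in the directions \<open>u n\<close>,
  one of the two signs loses little in \<open>g\<close>.\<close>
lemma variational_le_escape:
  fixes g :: "'a::real_normed_vector \<Rightarrow> real"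
  assumes p: "p > 0" and u: "asymptotically_lp_sequence p u" and t: "t > 0" and \<epsilon>: "\<epsilon> \<ge> 0"
    and flat: "eventually (\<lambda>n. - (\<epsilon>/4) * t powr p \<le> g (x + t *\<^sub>R u n) + g (x + (-t) *\<^sub>R u n) - 2 * g x) sequentially"
    and Z: "finite Z" "\<And>z. z \<in> Z \<Longrightarrow> variational_le p \<epsilon> g z x"
  obtains y where "\<And>z. z \<in> Z \<Longrightarrow> variational_le p \<epsilon> g z y"
    "norm x powr p + (3/4) * t powr p < norm y powr p" "g x - (\<epsilon>/8) * t powr p \<le> g y"
proof -
  define N where "N y = norm y powr p" for y :: 'a
  define tp where "tp = t powr p"
  have tp: "tp > 0" using t by (simp add: tp_def)
  have lim: "(\<lambda>n. N (w + s *\<^sub>R u n)) \<longlonglongrightarrow> N w + tp" if "\<bar>s\<bar> = t" for w s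
    using u that unfolding asymptotically_lp_sequence_def N_def tp_def by blast
  have gain: "eventually (\<lambda>n. N x + (3/4) * tp < N (x + s *\<^sub>R u n)) sequentially" if "\<bar>s\<bar> = t" for s
    using lim[OF that, of x] tp by (intro order_tendstoD(1)) auto
  have above: "eventually (\<lambda>n. (1/2) * norm (x + s *\<^sub>R u n - z) powr p < N (x + s *\<^sub>R u n) - N z) sequentially"
    if "\<bar>s\<bar> = t" "z \<in> Z" for s z
    using asymptotically_lp_sequence_eventually_gap[OF u, of s x z] Z(2)[OF that(2)] that(1) t
    by (simp add: variational_le_def N_def)
  have "eventually (\<lambda>n. - (\<epsilon>/4) * tp \<le> g (x + t *\<^sub>R u n) + g (x + (-t) *\<^sub>R u n) - 2 * g x \<and>
      (\<forall>s\<in>{t, -t}. N x + (3/4) * tp < N (x + s *\<^sub>R u n) \<and>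
        (\<forall>z\<in>Z. (1/2) * norm (x + s *\<^sub>R u n - z) powr p < N (x + s *\<^sub>R u n) - N z))) sequentially"
    using flat t Z(1) unfolding tp_def[symmetric]
    by (intro eventually_conj eventually_ball_finite ballI gain above) auto
  then obtain n where n2: "- (\<epsilon>/4) * tp \<le> g (x + t *\<^sub>R u n) + g (x + (-t) *\<^sub>R u n) - 2 * g x"
    and n: "\<And>s. s \<in> {t, -t} \<Longrightarrow> N x + (3/4) * tp < N (x + s *\<^sub>R u n) \<and>
        (\<forall>z\<in>Z. (1/2) * norm (x + s *\<^sub>R u n - z) powr p < N (x + s *\<^sub>R u n) - N z)"
    unfolding eventually_sequentially by blast
  obtain s where s: "s \<in> {t, -t}" and gs: "g x - (\<epsilon>/8) * tp \<le> g (x + s *\<^sub>R u n)"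
  proof (cases "g x - (\<epsilon>/8) * tp \<le> g (x + t *\<^sub>R u n)")
    case False
    then show ?thesis using that[of "-t"] n2 by auto
  qed (use that in auto)
  define y where "y = x + s *\<^sub>R u n"
  have Ny: "N x + (3/4) * tp < N y" and Nz: "\<And>z. z \<in> Z \<Longrightarrow> (1/2) * norm (y - z) powr p < N y - N z"
    using n[OF s] by (auto simp: y_def)
  have "variational_le p \<epsilon> g z y" if z: "z \<in> Z" for z
  proof -
    have "\<epsilon> * ((1/8) * tp) \<le> \<epsilon> * (N y - N x)" using Ny tp \<epsilon> by (intro mult_left_mono) auto
    moreover have "- \<epsilon> * (N x - N z) \<le> g x - g z" using Z(2)[OF z] by (simp add: variational_le_def N_def)
    ultimately have "- \<epsilon> * (N y - N z) \<le> g y - g z" using gs by (simp add: y_def algebra_simps)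
    then show ?thesis using Nz[OF z] by (simp add: variational_le_def N_def)
  qed
  moreover have "norm x powr p + (3/4) * t powr p < norm y powr p" using Ny by (simp add: N_def tp_def)
  moreover have "g x - (\<epsilon>/8) * t powr p \<le> g y" using gs by (simp add: tp_def y_def)
  ultimately show ?thesis by (rule that)
qed

text \<open>A variational principle in the spirit of Borwein--Preiss: perturbing \<open>g\<close> by
  \<open>\<epsilon> * norm _ powr p\<close> produces a point \<open>xb\<close> that is almost maximal for \<open>norm _ powr p\<close> among
  the points above it, and \<open>variational_le_escape\<close> contradicts this almost-maximality.\<close>
lemma no_bump_with_flat_second_differences:
  fixes g :: "'a::banach \<Rightarrow> real"
  assumes p: "p > 0" and u: "asymptotically_lp_sequence p u" and cont: "continuous_on UNIV g"
    and flat: "\<And>x e. e > 0 \<Longrightarrow> \<exists>\<delta>>0. \<forall>t. 0 < t \<and> t < \<delta> \<longrightarrow>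
        eventually (\<lambda>n. - e * t powr p \<le> g (x + t *\<^sub>R u n) + g (x + (-t) *\<^sub>R u n) - 2 * g x) sequentially"
    and g0: "g 0 > 0" and supp: "\<And>x. g x \<noteq> 0 \<Longrightarrow> norm x < R"
  shows False
proof -
  define a where "a = g 0"
  have a: "a > 0" using g0 by (simp add: a_def)
  have R: "R > 0" using supp[of 0] g0 by simp
  define N where "N y = norm y powr p" for y :: 'a
  define \<epsilon> where "\<epsilon> = a / (2 * (R powr p + 1))"
  have "2 * (R powr p + 1) > 0" by (simp add: add_nonneg_pos)
  then have "\<epsilon> > 0" "\<epsilon> * (2 * (R powr p + 1)) = a"
    using a unfolding \<epsilon>_def by simp_all
  then have "\<epsilon> > 0" "2 * (\<epsilon> * R powr p) + 2 * \<epsilon> = a" by (simp_all add: algebra_simps)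
  moreover have "\<epsilon> * R powr p \<ge> 0" using \<open>\<epsilon> > 0\<close> by simp
  ultimately have \<epsilon>: "\<epsilon> > 0" "\<epsilon> \<le> a / 2" "\<epsilon> * R powr p < a / 2" by linarith+
  define S where "S x = {y. variational_le p \<epsilon> g x y \<and> norm y \<le> R}" for x
  have closed_S: "closed (S x)" for x
    unfolding S_def by (rule closed_variational_le_set[OF p cont])
  have S_le_R: "norm y \<le> R" if "y \<in> S x" for x y using that by (simp add: S_def)
  obtain xs xb where xs0: "xs 0 = 0" and xb: "\<And>j. xb \<in> S (xs j)"
    and near_max: "\<And>K y. (\<And>j. j \<le> K \<Longrightarrow> y \<in> S (xs j)) \<Longrightarrow> N y \<le> N xb + (1/2) ^ K"
  proof (rule exists_nested_near_maximisers[of p "1/2" S "cball 0 R" N 0])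
    show "closed (S x)" for x by (rule closed_S)
    show "bdd_above (N ` cball 0 R)"
      using p by (intro bdd_aboveI[of _ "R powr p"]) (auto simp: N_def intro: powr_mono2)
  qed (use p R in \<open>auto simp: closed_S S_def variational_le_def N_def dist_norm\<close>)
  have gxb: "g xb > a / 2"
  proof -
    have "N xb \<le> R powr p" using S_le_R[OF xb[of 0]] p by (simp add: N_def powr_mono2)
    then have "\<epsilon> * N xb \<le> \<epsilon> * R powr p" using \<epsilon> by simp
    moreover have "- \<epsilon> * N xb \<le> g xb - a" using xb[of 0] by (simp add: S_def variational_le_def N_def xs0 a_def)
    ultimately show ?thesis using \<epsilon> by linarith
  qed
  obtain \<delta> where \<delta>: "\<delta> > 0" and flat_xb: "\<forall>t. 0 < t \<and> t < \<delta> \<longrightarrow>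
      eventually (\<lambda>n. - (\<epsilon>/4) * t powr p \<le> g (xb + t *\<^sub>R u n) + g (xb + (-t) *\<^sub>R u n) - 2 * g xb) sequentially"
    using flat[of "\<epsilon>/4" xb] \<epsilon> by auto
  define t where "t = min (\<delta>/2) (1/2)"
  have t: "0 < t" "t < \<delta>" "t powr p \<le> 1" using \<delta> p by (auto simp: t_def powr_le1)
  obtain K where K: "(1/2::real) ^ K < t powr p / 4"
    using real_arch_pow_inv[of "t powr p / 4" "1/2"] t by auto
  have "variational_le p \<epsilon> g z xb" if "z \<in> xs ` {..K}" for z using that xb by (auto simp: S_def)
  then obtain y where y: "\<And>z. z \<in> xs ` {..K} \<Longrightarrow> variational_le p \<epsilon> g z y"
    and Ny: "N xb + (3/4) * t powr p < N y" and gy: "g xb - (\<epsilon>/8) * t powr p \<le> g y"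
    using variational_le_escape[OF p u t(1) less_imp_le[OF \<epsilon>(1)] flat_xb[rule_format, OF conjI[OF t(1,2)]]
        finite_imageI[OF finite_atMost]]
    unfolding N_def by blast
  have "(\<epsilon>/8) * t powr p \<le> (\<epsilon>/8) * 1" using \<epsilon> t by (intro mult_left_mono) auto
  then have "g y \<noteq> 0" using gy gxb \<epsilon> by linarith
  then have "y \<in> S (xs j)" if "j \<le> K" for j using y that supp[of y] by (auto simp: S_def)
  then have "N y \<le> N xb + (1/2) ^ K" by (rule near_max)
  moreover have "t powr p > 0" using t by simp
  ultimately show False using Ny K by linarith
qed

lemma no_Tp_smooth_bump_if_lp_sequence:
  fixes u :: "nat \<Rightarrow> 'a::banach"
  assumes p: "p > 0" and p_not_even: "\<not> (\<exists>k::int. p = 2 * of_int k)"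
    and u: "isometric_lp_sequence p u" "asymptotically_lp_sequence p u"
  shows "\<not> (\<exists>f :: 'a \<Rightarrow> real. bump_function f \<and> Tp_smooth p f)"
proof
  assume "\<exists>f :: 'a \<Rightarrow> real. bump_function f \<and> Tp_smooth p f"
  then obtain f :: "'a \<Rightarrow> real" and x0 B where T: "\<And>x. has_taylor_exp p f x"
    and x0: "f x0 \<noteq> 0" and B: "\<And>x. f x \<noteq> 0 \<Longrightarrow> norm x \<le> B"
    unfolding bump_function_def Tp_smooth_def bounded_iff by blast
  define \<sigma> :: real where "\<sigma> = sgn (f x0)"
  define g where "g x = \<sigma> * f (x + x0)" for x
  have \<sigma>: "\<bar>\<sigma>\<bar> = 1" using x0 by (simp add: \<sigma>_def abs_sgn_eq)
  show False
  proof (rule no_bump_with_flat_second_differences[OF p u(2)])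
    have "((\<lambda>y. f (y + x0)) \<longlongrightarrow> f (x + x0)) (at x)" for x
      by (rule isCont_tendsto_compose[OF has_taylor_exp_isCont[OF p T]]) (intro tendsto_intros)
    then have "isCont (\<lambda>y. f (y + x0)) x" for x by (simp add: isCont_def)
    then show "continuous_on UNIV g"
      unfolding g_def by (intro continuous_at_imp_continuous_on ballI continuous_intros)
  next
    fix x and e :: real assume "e > 0"
    then obtain \<delta> where "\<delta> > 0" and \<delta>: "\<forall>t. 0 < t \<and> t < \<delta> \<longrightarrow> eventually (\<lambda>n.
        \<bar>f (x + x0 + t *\<^sub>R u n) + f (x + x0 + (-t) *\<^sub>R u n) - 2 * f (x + x0)\<bar> \<le> e * t powr p) sequentially"
      using has_taylor_exp_second_difference[OF u(1) p p_not_even T] by blast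
    have lower: "- e * t powr p \<le> g (x + t *\<^sub>R u n) + g (x + (-t) *\<^sub>R u n) - 2 * g x"
      if "\<bar>f (x + x0 + t *\<^sub>R u n) + f (x + x0 + (-t) *\<^sub>R u n) - 2 * f (x + x0)\<bar> \<le> e * t powr p" for t n
    proof -
      have "g (x + t *\<^sub>R u n) + g (x + (-t) *\<^sub>R u n) - 2 * g x
          = \<sigma> * (f (x + x0 + t *\<^sub>R u n) + f (x + x0 + (-t) *\<^sub>R u n) - 2 * f (x + x0))"
        by (simp add: g_def algebra_simps)
      then have "\<bar>g (x + t *\<^sub>R u n) + g (x + (-t) *\<^sub>R u n) - 2 * g x\<bar> \<le> e * t powr p"
        using that \<sigma> by (simp add: abs_mult)
      then show ?thesis by (simp add: abs_le_iff)
    qed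
    show "\<exists>\<delta>>0. \<forall>t. 0 < t \<and> t < \<delta> \<longrightarrow> eventually (\<lambda>n.
        - e * t powr p \<le> g (x + t *\<^sub>R u n) + g (x + (-t) *\<^sub>R u n) - 2 * g x) sequentially"
    proof (intro exI[of _ \<delta>] conjI allI impI \<open>\<delta> > 0\<close>)
      fix t assume "0 < t \<and> t < \<delta>"
      with \<delta> show "eventually (\<lambda>n.
          - e * t powr p \<le> g (x + t *\<^sub>R u n) + g (x + (-t) *\<^sub>R u n) - 2 * g x) sequentially"
        by (blast intro: eventually_mono lower)
    qed
  next
    show "g 0 > 0" using x0 by (simp add: g_def \<sigma>_def sgn_real_def)
  next
    fix x assume "g x \<noteq> 0"
    then have "norm (x + x0) \<le> B" by (intro B) (simp add: g_def)
    then show "norm x < B + norm x0 + 1" using norm_triangle_ineq4[of "x + x0" x0] by simp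
  qed
qed

section \<open>Disjointly supported sequences in \<open>L\<^sub>p\<close>\<close>

lemma disjoint_family_Diff_Suc:
  assumes "decseq R" shows "disjoint_family (\<lambda>n. R n - R (Suc n))"
  unfolding disjoint_family_on_def
proof (intro ballI impI)
  have *: "(R m - R (Suc m)) \<inter> (R n - R (Suc n)) = {}" if "m < n" for m n
    using decseqD[OF assms, of "Suc m" n] that by auto
  fix m n :: nat assume "m \<noteq> n"
  then consider "m < n" | "n < m" by linarith
  then show "(R m - R (Suc m)) \<inter> (R n - R (Suc n)) = {}" by cases (use *[of m n] *[of n m] in blast)+
qed

definition finitely_spanned :: "'a::real_vector set \<Rightarrow> bool" where
  "finitely_spanned V \<longleftrightarrow> (\<exists>S. finite S \<and> V \<subseteq> span S)"

lemma AE_eq_const_of_dichotomy: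
  fixes r :: "'m \<Rightarrow> real"
  assumes S: "\<not> (AE \<omega> in M. \<omega> \<notin> S)"
    and dichotomy: "\<And>q. (AE \<omega> in M. \<omega> \<in> S \<longrightarrow> q \<le> r \<omega>) \<or> (AE \<omega> in M. \<omega> \<in> S \<longrightarrow> r \<omega> < q)"
  obtains c where "AE \<omega> in M. \<omega> \<in> S \<longrightarrow> r \<omega> = c"
proof -
  define P where "P q \<longleftrightarrow> (AE \<omega> in M. \<omega> \<in> S \<longrightarrow> q \<le> r \<omega>)" for q
  \<comment> \<open>a.e. on \<open>S\<close>, the rational lower bounds of \<open>r \<omega>\<close> are exactly the \<open>q\<close> with \<open>P q\<close>\<close>
  have "AE \<omega> in M. \<omega> \<in> S \<longrightarrow> (q \<le> r \<omega> \<longleftrightarrow> P q)" for q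
    using dichotomy[of q] by (cases "P q") (auto simp: P_def elim!: AE_mp)
  then have good: "AE \<omega> in M. \<forall>q\<in>\<rat>. \<omega> \<in> S \<longrightarrow> (q \<le> r \<omega> \<longleftrightarrow> P q)"
    by (subst AE_ball_countable) (auto simp: countable_rat)
  have "\<exists>\<omega>0\<in>S. \<forall>q\<in>\<rat>. q \<le> r \<omega>0 \<longleftrightarrow> P q"
  proof (rule ccontr)
    assume none: "\<not> ?thesis"
    from good have "AE \<omega> in M. \<omega> \<notin> S" by eventually_elim (use none in blast)
    then show False using S by blast
  qed
  then obtain \<omega>0 where \<omega>0: "\<omega>0 \<in> S" "\<forall>q\<in>\<rat>. q \<le> r \<omega>0 \<longleftrightarrow> P q" by blast
  have "r \<omega> = r \<omega>0" if "\<omega> \<in> S" "\<forall>q\<in>\<rat>. q \<le> r \<omega> \<longleftrightarrow> P q" for \<omega>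
  proof (rule ccontr)
    assume "r \<omega> \<noteq> r \<omega>0"
    then consider "r \<omega> < r \<omega>0" | "r \<omega>0 < r \<omega>" by linarith
    then show False
      by cases (metis Rats_dense_in_real \<omega>0(2) that(2) not_le order.strict_implies_order)+
  qed
  then have "AE \<omega> in M. \<omega> \<in> S \<longrightarrow> r \<omega> = r \<omega>0" using good by (auto elim!: AE_mp)
  then show ?thesis by (rule that)
qed

locale Lp_representation =
  fixes p :: real and M :: "'m measure" and T :: "'a::real_normed_vector \<Rightarrow> 'm \<Rightarrow> real"
  assumes p_pos: "p > 0" and isometry: "Lp_isometry p M T"
begin

lemma measurable_T [measurable]: "T x \<in> borel_measurable M"
  using isometry unfolding Lp_isometry_def by blast

lemma integrable_T_powr: "integrable M (\<lambda>\<omega>. \<bar>T x \<omega>\<bar> powr p)"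
  using isometry unfolding Lp_isometry_def by blast

lemma AE_T_add: "AE \<omega> in M. T (x + y) \<omega> = T x \<omega> + T y \<omega>"
  using isometry unfolding Lp_isometry_def by blast

lemma AE_T_scaleR: "AE \<omega> in M. T (c *\<^sub>R x) \<omega> = c * T x \<omega>"
  using isometry unfolding Lp_isometry_def by blast

lemma exists_T_eq:
  "h \<in> borel_measurable M \<Longrightarrow> integrable M (\<lambda>\<omega>. \<bar>h \<omega>\<bar> powr p) \<Longrightarrow> \<exists>x. AE \<omega> in M. T x \<omega> = h \<omega>"
  using isometry unfolding Lp_isometry_def by blast

lemma norm_powr_eq_integral: "norm x powr p = (\<integral>\<omega>. \<bar>T x \<omega>\<bar> powr p \<partial>M)"
proof -
  have "norm x = (\<integral>\<omega>. \<bar>T x \<omega>\<bar> powr p \<partial>M) powr (1 / p)"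
    using isometry unfolding Lp_isometry_def by blast
  moreover have "(\<integral>\<omega>. \<bar>T x \<omega>\<bar> powr p \<partial>M) \<ge> 0" by (rule integral_nonneg_AE) auto
  ultimately show ?thesis using p_pos by (simp add: powr_powr)
qed

lemma norm_powr_eq_integral_AE:
  "AE \<omega> in M. T x \<omega> = h \<omega> \<Longrightarrow> h \<in> borel_measurable M \<Longrightarrow> norm x powr p = (\<integral>\<omega>. \<bar>h \<omega>\<bar> powr p \<partial>M)"
  unfolding norm_powr_eq_integral by (rule integral_cong_AE) auto

lemma AE_T_diff: "AE \<omega> in M. T (x - y) \<omega> = T x \<omega> - T y \<omega>"
  using AE_T_add[of x "(-1) *\<^sub>R y"] AE_T_scaleR[of "-1" y] by eventually_elim simp

lemma zero_iff_AE_T_zero: "x = 0 \<longleftrightarrow> (AE \<omega> in M. T x \<omega> = 0)"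
proof
  assume "AE \<omega> in M. T x \<omega> = 0"
  then have "norm x powr p = (\<integral>\<omega>. \<bar>0::real\<bar> powr p \<partial>M)" by (rule norm_powr_eq_integral_AE) simp
  then show "x = 0" using p_pos by simp
qed (use AE_T_scaleR[of 0 0] in simp)

lemma eq_if_AE_T_eq: "AE \<omega> in M. T x \<omega> = T y \<omega> \<Longrightarrow> x = y"
  using AE_T_diff[of x y] zero_iff_AE_T_zero[of "x - y"] by (auto elim: AE_mp)

lemma exists_band_projection:
  assumes "B \<in> sets M" shows "\<exists>z. AE \<omega> in M. T z \<omega> = indicator B \<omega> * T x \<omega>"
proof (rule exists_T_eq)
  have "integrable M (\<lambda>\<omega>. indicator B \<omega> *\<^sub>R \<bar>T x \<omega>\<bar> powr p)"
    by (rule integrable_mult_indicator[OF assms integrable_T_powr])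
  moreover have "\<bar>indicator B \<omega> * T x \<omega>\<bar> powr p = indicator B \<omega> *\<^sub>R \<bar>T x \<omega>\<bar> powr p" for \<omega>
    using p_pos by (auto simp: indicator_def)
  ultimately show "integrable M (\<lambda>\<omega>. \<bar>indicator B \<omega> * T x \<omega>\<bar> powr p)" by simp
qed (use assms in measurable)

lemma norm_powr_add_disjoint:
  assumes "AE \<omega> in M. T x \<omega> * T y \<omega> = 0"
  shows "norm (x + y) powr p = norm x powr p + norm y powr p"
proof -
  have "norm (x + y) powr p = (\<integral>\<omega>. \<bar>T x \<omega> + T y \<omega>\<bar> powr p \<partial>M)"
    by (rule norm_powr_eq_integral_AE[OF AE_T_add]) simp
  also have "\<dots> = (\<integral>\<omega>. \<bar>T x \<omega>\<bar> powr p + \<bar>T y \<omega>\<bar> powr p \<partial>M)"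
    using assms by (intro integral_cong_AE) (auto elim!: AE_mp simp: p_pos)
  also have "\<dots> = norm x powr p + norm y powr p"
    by (simp add: integrable_T_powr norm_powr_eq_integral)
  finally show ?thesis .
qed


definition band :: "'m set \<Rightarrow> 'a set" where
  "band B = {x. AE \<omega> in M. \<omega> \<notin> B \<longrightarrow> T x \<omega> = 0}"

lemma zero_in_band: "0 \<in> band B"
  using zero_iff_AE_T_zero[of 0] unfolding band_def by (auto elim: AE_mp)

lemma band_scaleR: "x \<in> band B \<Longrightarrow> c *\<^sub>R x \<in> band B"
  unfolding band_def using AE_T_scaleR[of c x] by (auto elim!: AE_mp)

lemma band_add: "x \<in> band B \<Longrightarrow> y \<in> band B \<Longrightarrow> x + y \<in> band B"
  unfolding band_def using AE_T_add[of x y] by (auto elim!: AE_mp)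

lemma band_mono: "A \<subseteq> B \<Longrightarrow> band A \<subseteq> band B"
  unfolding band_def by (auto elim!: AE_mp)

lemma band_sum: "finite F \<Longrightarrow> (\<And>i. i \<in> F \<Longrightarrow> x i \<in> band B) \<Longrightarrow> (\<Sum>i\<in>F. x i) \<in> band B"
proof (induction F rule: finite_induct)
  case empty then show ?case by (simp add: zero_in_band)
next
  case (insert i F) then show ?case by (simp add: band_add)
qed

lemma norm_powr_add_disjoint_bands:
  assumes "x \<in> band A" "y \<in> band B" "A \<inter> B = {}"
  shows "norm (x + y) powr p = norm x powr p + norm y powr p"
proof (rule norm_powr_add_disjoint)
  have "AE \<omega> in M. \<omega> \<notin> A \<longrightarrow> T x \<omega> = 0" "AE \<omega> in M. \<omega> \<notin> B \<longrightarrow> T y \<omega> = 0"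
    using assms(1,2) by (simp_all add: band_def)
  then show "AE \<omega> in M. T x \<omega> * T y \<omega> = 0"
    by eventually_elim (use assms(3) in \<open>cases "\<omega> \<in> A"; auto\<close>)
qed

lemma band_projection_in_band: "AE \<omega> in M. T z \<omega> = indicator B \<omega> * T x \<omega> \<Longrightarrow> z \<in> band B"
  unfolding band_def by (auto elim!: AE_mp)

lemma AE_T_zero_on_if_band_trivial:
  assumes "C \<in> sets M" "band C \<subseteq> {0}" shows "AE \<omega> in M. \<omega> \<in> C \<longrightarrow> T x \<omega> = 0"
proof -
  obtain z where z: "AE \<omega> in M. T z \<omega> = indicator C \<omega> * T x \<omega>"
    using exists_band_projection[OF assms(1)] by blast
  then have "z = 0" using band_projection_in_band assms(2) by blast
  then have "AE \<omega> in M. T z \<omega> = 0" using zero_iff_AE_T_zero by blast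
  with z show ?thesis by eventually_elim (simp add: indicator_def)
qed

lemma finitely_spanned_band_Diff:
  assumes C: "C \<in> sets M" "C \<subseteq> B"
    and fin: "finitely_spanned (band C)" "finitely_spanned (band (B - C))"
  shows "finitely_spanned (band B)"
proof -
  obtain S1 S2 where S: "finite S1" "band C \<subseteq> span S1" "finite S2" "band (B - C) \<subseteq> span S2"
    using fin unfolding finitely_spanned_def by blast
  have "x \<in> span (S1 \<union> S2)" if x: "x \<in> band B" for x
  proof -
    obtain x1 where x1: "AE \<omega> in M. T x1 \<omega> = indicator C \<omega> * T x \<omega>"
      using exists_band_projection[OF C(1)] by blast
    have "x - x1 \<in> band (B - C)"
      using x1 AE_T_diff[of x x1] x C(2) unfolding band_def by (auto elim!: AE_mp simp: indicator_def)
    moreover have "x1 \<in> band C" by (rule band_projection_in_band[OF x1])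
    ultimately have "x1 \<in> span (S1 \<union> S2)" "x - x1 \<in> span (S1 \<union> S2)"
      using S span_mono[of S1 "S1 \<union> S2"] span_mono[of S2 "S1 \<union> S2"] by auto
    then have "x1 + (x - x1) \<in> span (S1 \<union> S2)" by (rule span_add)
    then show ?thesis by simp
  qed
  then show ?thesis using S unfolding finitely_spanned_def by (intro exI[of _ "S1 \<union> S2"]) auto
qed

text \<open>Indecomposability, applied to the sublevel sets of the ratio, yields the dichotomy required by
  \<open>AE_eq_const_of_dichotomy\<close>.\<close>
lemma AE_T_ratio_const_if_indecomposable:
  assumes B: "B \<in> sets M"
    and indec: "\<And>C. C \<in> sets M \<Longrightarrow> C \<subseteq> B \<Longrightarrow> band C \<subseteq> {0} \<or> band (B - C) \<subseteq> {0}"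
    and S: "S \<in> sets M" "S \<subseteq> B" "\<not> (AE \<omega> in M. \<omega> \<notin> S)" and x0: "\<And>\<omega>. \<omega> \<in> S \<Longrightarrow> T x0 \<omega> \<noteq> 0"
  obtains c where "AE \<omega> in M. \<omega> \<in> S \<longrightarrow> T y \<omega> / T x0 \<omega> = c"
proof (rule AE_eq_const_of_dichotomy[OF S(3)])
  fix q
  define C where "C = {\<omega> \<in> space M. \<omega> \<in> S \<and> T y \<omega> / T x0 \<omega> < q}"
  have C: "C \<in> sets M" "C \<subseteq> B" "B - C \<in> sets M"
    using S B unfolding C_def by auto
  consider "band C \<subseteq> {0}" | "band (B - C) \<subseteq> {0}" using indec[OF C(1,2)] by blast
  then show "(AE \<omega> in M. \<omega> \<in> S \<longrightarrow> q \<le> T y \<omega> / T x0 \<omega>) \<or> (AE \<omega> in M. \<omega> \<in> S \<longrightarrow> T y \<omega> / T x0 \<omega> < q)"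
  proof cases
    case 1
    from AE_space AE_T_zero_on_if_band_trivial[OF C(1) 1, of x0]
    have "AE \<omega> in M. \<omega> \<in> S \<longrightarrow> q \<le> T y \<omega> / T x0 \<omega>"
      by eventually_elim (auto simp: C_def not_less dest: x0)
    then show ?thesis ..
  next
    case 2
    from AE_space AE_T_zero_on_if_band_trivial[OF C(3) 2, of x0]
    have "AE \<omega> in M. \<omega> \<in> S \<longrightarrow> T y \<omega> / T x0 \<omega> < q"
      by eventually_elim (use S(2) in \<open>auto simp: C_def dest: x0\<close>)
    then show ?thesis ..
  qed
qed

lemma band_subset_span_if_indecomposable:
  assumes B: "B \<in> sets M"
    and indec: "\<And>C. C \<in> sets M \<Longrightarrow> C \<subseteq> B \<Longrightarrow> band C \<subseteq> {0} \<or> band (B - C) \<subseteq> {0}"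
    and x0: "x0 \<in> band B" "x0 \<noteq> 0" and y: "y \<in> band B"
  shows "y \<in> span {x0}"
proof -
  define S where "S = {\<omega> \<in> space M. \<omega> \<in> B \<and> T x0 \<omega> \<noteq> 0}"
  have S: "S \<in> sets M" "S \<subseteq> B" "B - S \<in> sets M" using B unfolding S_def by auto
  have "AE \<omega> in M. \<omega> \<notin> B \<longrightarrow> T x0 \<omega> = 0" using x0(1) by (simp add: band_def)
  with AE_space have x0_S: "AE \<omega> in M. \<omega> \<notin> S \<longrightarrow> T x0 \<omega> = 0"
    by eventually_elim (auto simp: S_def)
  then have "\<not> band S \<subseteq> {0}" using x0 by (auto simp: band_def)
  then have y_BS: "AE \<omega> in M. \<omega> \<in> B - S \<longrightarrow> T y \<omega> = 0"
    using indec[OF S(1,2)] by (intro AE_T_zero_on_if_band_trivial[OF S(3)]) auto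
  have "\<not> (AE \<omega> in M. \<omega> \<notin> S)"
  proof
    assume "AE \<omega> in M. \<omega> \<notin> S"
    with x0_S have "AE \<omega> in M. T x0 \<omega> = 0" by eventually_elim blast
    then show False using x0(2) zero_iff_AE_T_zero by blast
  qed
  then obtain c where c: "AE \<omega> in M. \<omega> \<in> S \<longrightarrow> T y \<omega> / T x0 \<omega> = c"
    using AE_T_ratio_const_if_indecomposable[OF B indec S(1,2)] by (auto simp: S_def)
  have y_B: "AE \<omega> in M. \<omega> \<notin> B \<longrightarrow> T y \<omega> = 0" using y by (simp add: band_def)
  from c y_BS y_B x0_S AE_T_scaleR[of c x0] have "AE \<omega> in M. T y \<omega> = T (c *\<^sub>R x0) \<omega>"
  proof eventually_elim
    case (elim \<omega>)
    show ?case
    proof (cases "\<omega> \<in> S")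
      case True
      then have "T x0 \<omega> \<noteq> 0" by (simp add: S_def)
      then show ?thesis using elim True by (simp add: field_simps)
    next
      case False
      then show ?thesis using elim by (cases "\<omega> \<in> B") auto
    qed
  qed
  then have "y = c *\<^sub>R x0" by (rule eq_if_AE_T_eq)
  then show ?thesis by (simp add: span_base span_scale)
qed

lemma exists_split_band:
  assumes B: "B \<in> sets M" and inf: "\<not> finitely_spanned (band B)"
  obtains C where "C \<in> sets M" "C \<subseteq> B" "\<not> band C \<subseteq> {0}" "\<not> finitely_spanned (band (B - C))"
proof -
  have "\<exists>C\<in>sets M. C \<subseteq> B \<and> \<not> band C \<subseteq> {0} \<and> \<not> band (B - C) \<subseteq> {0}"
  proof (rule ccontr)
    assume "\<not> ?thesis"
    then have indec: "\<And>C. C \<in> sets M \<Longrightarrow> C \<subseteq> B \<Longrightarrow> band C \<subseteq> {0} \<or> band (B - C) \<subseteq> {0}" by blast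
    have "\<not> band B \<subseteq> span {}" using inf unfolding finitely_spanned_def by blast
    then obtain x0 where x0: "x0 \<in> band B" "x0 \<noteq> 0" by auto
    then have "band B \<subseteq> span {x0}" using band_subset_span_if_indecomposable[OF B indec] by blast
    then show False using inf unfolding finitely_spanned_def by blast
  qed
  then obtain C where C: "C \<in> sets M" "C \<subseteq> B" "\<not> band C \<subseteq> {0}" "\<not> band (B - C) \<subseteq> {0}" by blast
  show ?thesis
  proof (cases "finitely_spanned (band (B - C))")
    case True
    then have "\<not> finitely_spanned (band C)" using finitely_spanned_band_Diff[OF C(1,2)] inf by blast
    moreover have "B - (B - C) = C" using C(2) by blast
    moreover have "B - C \<in> sets M" using B C(1) by blast
    ultimately show ?thesis using that[of "B - C"] C(4) by simp
  qed (use that C in blast)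
qed

lemma exists_disjoint_unit_sequence:
  assumes "\<not> finitely_spanned (band (space M))"
  obtains C :: "nat \<Rightarrow> 'm set" and u :: "nat \<Rightarrow> 'a" where "\<And>n. C n \<in> sets M" "\<And>n. u n \<in> band (C n)" "\<And>n. norm (u n) = 1"
    "disjoint_family C"
proof -
  \<comment> \<open>keep splitting off a nontrivial band from an infinite-dimensional remainder\<close>
  have "\<exists>R. \<forall>n. (R n \<in> sets M \<and> \<not> finitely_spanned (band (R n))) \<and>
      (R (Suc n) \<subseteq> R n \<and> R n - R (Suc n) \<in> sets M \<and> \<not> band (R n - R (Suc n)) \<subseteq> {0})"
  proof (rule dependent_nat_choice[where P = "\<lambda>_ R. R \<in> sets M \<and> \<not> finitely_spanned (band R)"
      and Q = "\<lambda>_ R R'. R' \<subseteq> R \<and> R - R' \<in> sets M \<and> \<not> band (R - R') \<subseteq> {0}"])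
    show "\<exists>R. R \<in> sets M \<and> \<not> finitely_spanned (band R)"
      using assms sets.top by blast
  next
    fix R and n :: nat assume R: "R \<in> sets M \<and> \<not> finitely_spanned (band R)"
    show "\<exists>R'. (R' \<in> sets M \<and> \<not> finitely_spanned (band R')) \<and>
        (R' \<subseteq> R \<and> R - R' \<in> sets M \<and> \<not> band (R - R') \<subseteq> {0})"
    proof (rule exists_split_band[of R])
      fix C assume C: "C \<in> sets M" "C \<subseteq> R" "\<not> band C \<subseteq> {0}" "\<not> finitely_spanned (band (R - C))"
      have "R - (R - C) = C" using C(2) by blast
      moreover have "R - C \<in> sets M" using R C(1) by blast
      ultimately show ?thesis using C by (intro exI[of _ "R - C"] conjI) simp_all
    qed (use R in auto)
  qed
  then obtain R where R: "\<And>n. R (Suc n) \<subseteq> R n" "\<And>n. R n - R (Suc n) \<in> sets M"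
    "\<And>n. \<not> band (R n - R (Suc n)) \<subseteq> {0}" by blast
  define C where "C n = R n - R (Suc n)" for n
  have "disjoint_family C"
    unfolding C_def by (rule disjoint_family_Diff_Suc[OF decseq_SucI[of R, OF R(1)]])
  moreover have "\<forall>n. \<exists>y. y \<in> band (C n) \<and> y \<noteq> 0" using R(3) unfolding C_def by blast
  from choice[OF this] obtain x where x: "\<And>n. x n \<in> band (C n) \<and> x n \<noteq> 0" by blast
  ultimately show ?thesis
    using that[of C "\<lambda>n. inverse (norm (x n)) *\<^sub>R x n"] R(2) x by (simp add: C_def band_scaleR)
qed


lemma isometric_lp_sequence_if_disjoint:
  assumes C: "disjoint_family C" and u: "\<And>n. u n \<in> band (C n)" "\<And>n. norm (u n) = 1"
  shows "isometric_lp_sequence p u"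
  unfolding isometric_lp_sequence_def
proof (intro allI impI)
  fix F :: "nat set" and c :: "nat \<Rightarrow> real" assume "finite F"
  then show "norm (\<Sum>i\<in>F. c i *\<^sub>R u i) powr p = (\<Sum>i\<in>F. \<bar>c i\<bar> powr p)"
  proof induction
    case empty
    show ?case using p_pos by simp
  next
    case (insert j F)
    have "C j \<inter> C i = {}" if "i \<in> F" for i
      using that insert(2) by (intro disjoint_family_onD[OF C]) auto
    then have disj: "C j \<inter> (\<Union>i\<in>F. C i) = {}" by blast
    have "c i *\<^sub>R u i \<in> band (\<Union>i\<in>F. C i)" if "i \<in> F" for i
      using band_mono[of "C i" "\<Union>i\<in>F. C i"] band_scaleR[OF u(1)] that by blast
    then have "(\<Sum>i\<in>F. c i *\<^sub>R u i) \<in> band (\<Union>i\<in>F. C i)" by (rule band_sum[OF insert(1)])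
    then have "norm (c j *\<^sub>R u j + (\<Sum>i\<in>F. c i *\<^sub>R u i)) powr p
        = norm (c j *\<^sub>R u j) powr p + norm (\<Sum>i\<in>F. c i *\<^sub>R u i) powr p"
      by (rule norm_powr_add_disjoint_bands[OF band_scaleR[OF u(1)] _ disj])
    then show ?case using insert(1,2,3) u(2)[of j] by simp
  qed
qed

lemma norm_band_projection_tendsto_zero:
  assumes C: "\<And>n. C n \<in> sets M" "disjoint_family C"
    and \<pi>: "\<And>n. AE \<omega> in M. T (\<pi> n) \<omega> = indicator (C n) \<omega> * T w \<omega>"
  shows "(\<lambda>n. norm (\<pi> n)) \<longlonglongrightarrow> 0"
proof -
  have \<pi>_powr: "norm (\<pi> n) powr p = (\<integral>\<omega>. \<bar>T w \<omega>\<bar> powr p * indicator (C n) \<omega> \<partial>M)" for n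
  proof -
    have "norm (\<pi> n) powr p = (\<integral>\<omega>. \<bar>indicator (C n) \<omega> * T w \<omega>\<bar> powr p \<partial>M)"
      by (rule norm_powr_eq_integral_AE[OF \<pi>]) (use C in measurable)
    also have "\<dots> = (\<integral>\<omega>. \<bar>T w \<omega>\<bar> powr p * indicator (C n) \<omega> \<partial>M)"
      by (rule Bochner_Integration.integral_cong) (auto simp: indicator_def p_pos)
    finally show ?thesis .
  qed
  have int: "integrable M (\<lambda>\<omega>. \<bar>T w \<omega>\<bar> powr p * indicator (C n) \<omega>)" for n
    by (rule integrable_real_mult_indicator[OF C(1) integrable_T_powr])
  \<comment> \<open>the projections onto disjoint bands are disjointly supported pieces of \<open>w\<close>, so their \<open>p\<close>-th powers are summable\<close>
  have "(\<Sum>n<N. norm (\<pi> n) powr p) \<le> norm w powr p" for N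
  proof -
    have "(\<Sum>n<N. indicator (C n) \<omega> :: real) \<le> 1" for \<omega>
    proof -
      have "(\<Sum>n<N. indicator (C n) \<omega> :: real) = indicator (\<Union>(C ` {..<N})) \<omega>"
        using disjoint_family_on_mono[OF subset_UNIV C(2)] by (intro indicator_UN_disjoint[symmetric]) simp_all
      then show ?thesis by (simp add: indicator_def)
    qed
    then have "(\<Sum>n<N. \<bar>T w \<omega>\<bar> powr p * indicator (C n) \<omega>) \<le> \<bar>T w \<omega>\<bar> powr p" for \<omega>
      unfolding sum_distrib_left[symmetric] by (rule mult_left_le) simp_all
    then have "(\<integral>\<omega>. (\<Sum>n<N. \<bar>T w \<omega>\<bar> powr p * indicator (C n) \<omega>) \<partial>M) \<le> (\<integral>\<omega>. \<bar>T w \<omega>\<bar> powr p \<partial>M)"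
      by (intro integral_mono Bochner_Integration.integrable_sum int integrable_T_powr)
    moreover have "(\<integral>\<omega>. (\<Sum>n<N. \<bar>T w \<omega>\<bar> powr p * indicator (C n) \<omega>) \<partial>M) = (\<Sum>n<N. norm (\<pi> n) powr p)"
      unfolding \<pi>_powr by (rule Bochner_Integration.integral_sum[OF int])
    ultimately show ?thesis by (simp add: norm_powr_eq_integral[of w])
  qed
  then have "summable (\<lambda>n. norm (\<pi> n) powr p)"
    by (intro summableI_nonneg_bounded[of _ "norm w powr p"]) auto
  then have "(\<lambda>n. (norm (\<pi> n) powr p) powr (1 / p)) \<longlonglongrightarrow> 0 powr (1 / p)"
    using p_pos by (intro tendsto_powr' summable_LIMSEQ_zero tendsto_const) auto
  then show ?thesis using p_pos by (simp add: powr_powr)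
qed


text \<open>\<open>w - \<pi>\<close> is supported off \<open>C\<close>, while \<open>\<pi> + v\<close> is supported on \<open>C\<close>.\<close>
lemma norm_powr_add_band_projection:
  assumes \<pi>: "AE \<omega> in M. T \<pi> \<omega> = indicator C \<omega> * T w \<omega>" and v: "v \<in> band C"
  shows "norm (w + v) powr p = norm (w - \<pi>) powr p + norm (\<pi> + v) powr p"
proof -
  have "AE \<omega> in M. \<omega> \<notin> C \<longrightarrow> T v \<omega> = 0" using v by (simp add: band_def)
  with AE_T_diff[of w \<pi>] \<pi> AE_T_add[of \<pi> v]
  have "AE \<omega> in M. T (w - \<pi>) \<omega> * T (\<pi> + v) \<omega> = 0"
    by eventually_elim (simp add: indicator_def)
  then have "norm (w - \<pi> + (\<pi> + v)) powr p = norm (w - \<pi>) powr p + norm (\<pi> + v) powr p"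
    by (rule norm_powr_add_disjoint)
  then show ?thesis by simp
qed

lemma asymptotically_lp_sequence_if_disjoint:
  assumes C: "\<And>n. C n \<in> sets M" "disjoint_family C"
    and u: "\<And>n. u n \<in> band (C n)" "\<And>n. norm (u n) = 1"
  shows "asymptotically_lp_sequence p u"
  unfolding asymptotically_lp_sequence_def
proof (intro allI)
  fix w s
  have "\<forall>n. \<exists>z. AE \<omega> in M. T z \<omega> = indicator (C n) \<omega> * T w \<omega>"
    using exists_band_projection[OF C(1)] by blast
  from choice[OF this] obtain \<pi> where \<pi>: "\<And>n. AE \<omega> in M. T (\<pi> n) \<omega> = indicator (C n) \<omega> * T w \<omega>"
    by blast
  have split_ws: "norm (w + s *\<^sub>R u n) powr p = norm (w - \<pi> n) powr p + norm (\<pi> n + s *\<^sub>R u n) powr p" for n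
    using norm_powr_add_band_projection[OF \<pi> band_scaleR[OF u(1)]] .
  have split_w: "norm w powr p = norm (w - \<pi> n) powr p + norm (\<pi> n) powr p" for n
    using norm_powr_add_band_projection[OF \<pi> zero_in_band] by simp
  have \<pi>0: "(\<lambda>n. norm (\<pi> n)) \<longlonglongrightarrow> 0"
    by (rule norm_band_projection_tendsto_zero[OF C \<pi>])
  then have "(\<lambda>n. norm (\<pi> n) powr p) \<longlonglongrightarrow> 0 powr p"
    using p_pos by (intro tendsto_powr') auto
  then have "(\<lambda>n. norm w powr p - norm (\<pi> n) powr p) \<longlonglongrightarrow> norm w powr p - 0"
    using p_pos by (intro tendsto_diff tendsto_const) simp
  moreover have "norm w powr p - norm (\<pi> n) powr p = norm (w - \<pi> n) powr p" for n
    using split_w[of n] by simp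
  ultimately have lim_w: "(\<lambda>n. norm (w - \<pi> n) powr p) \<longlonglongrightarrow> norm w powr p" by simp
  have "(\<lambda>n. norm (\<pi> n + s *\<^sub>R u n) - \<bar>s\<bar>) \<longlonglongrightarrow> 0"
  proof (rule Lim_null_comparison[OF always_eventually \<pi>0], rule allI)
    fix n
    have "\<bar>norm (\<pi> n + s *\<^sub>R u n) - norm (s *\<^sub>R u n)\<bar> \<le> norm (\<pi> n)"
      using norm_triangle_ineq3[of "\<pi> n + s *\<^sub>R u n" "s *\<^sub>R u n"] by simp
    then show "norm (norm (\<pi> n + s *\<^sub>R u n) - \<bar>s\<bar>) \<le> norm (\<pi> n)" using u(2) by simp
  qed
  from tendsto_add[OF this tendsto_const[of "\<bar>s\<bar>"]]
  have "(\<lambda>n. norm (\<pi> n + s *\<^sub>R u n)) \<longlonglongrightarrow> \<bar>s\<bar>" by simp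
  then have "(\<lambda>n. norm (\<pi> n + s *\<^sub>R u n) powr p) \<longlonglongrightarrow> \<bar>s\<bar> powr p"
    using p_pos by (intro tendsto_powr') auto
  from tendsto_add[OF lim_w this]
  show "(\<lambda>n. norm (w + s *\<^sub>R u n) powr p) \<longlonglongrightarrow> norm w powr p + \<bar>s\<bar> powr p"
    by (simp add: split_ws)
qed


lemma exists_lp_sequence:
  assumes "\<not> finitely_spanned (UNIV :: 'a set)"
  obtains u :: "nat \<Rightarrow> 'a" where "isometric_lp_sequence p u" "asymptotically_lp_sequence p u"
proof -
  have "band (space M) = UNIV" by (auto simp: band_def intro: AE_I2)
  then obtain C :: "nat \<Rightarrow> 'm set" and u where C: "\<And>n. C n \<in> sets M" "disjoint_family C"
    and u: "\<And>n. u n \<in> band (C n)" "\<And>n. norm (u n) = 1"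
    using exists_disjoint_unit_sequence assms by metis
  show ?thesis
    by (rule that[OF isometric_lp_sequence_if_disjoint[OF C(2) u] asymptotically_lp_sequence_if_disjoint[OF C u]])
qed

end

theorem corollary1p2:
  fixes p :: real and M :: "'m measure"
  assumes "p \<ge> 1"
    and "\<not> (\<exists>k::int. p = 2 * of_int k)"
    and "Lp_space_iso p M TYPE('a::banach)"
    and "\<not> (\<exists>S :: 'a set. finite S \<and> span S = UNIV)"
  shows "\<not> (\<exists>f :: 'a \<Rightarrow> real. bump_function f \<and> Tp_smooth p f)"
proof -
  have p: "p > 0" using assms(1) by simp
  obtain T :: "'a \<Rightarrow> 'm \<Rightarrow> real" where "Lp_isometry p M T"
    using assms(3) unfolding Lp_space_iso_def by blast
  then interpret Lp_representation p M T using p by unfold_locales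
  have "\<not> finitely_spanned (UNIV :: 'a set)"
    using assms(4) unfolding finitely_spanned_def by (simp add: top.extremum_unique)
  then obtain u :: "nat \<Rightarrow> 'a" where "isometric_lp_sequence p u" "asymptotically_lp_sequence p u"
    by (rule exists_lp_sequence)
  then show ?thesis using no_Tp_smooth_bump_if_lp_sequence[OF p assms(2)] by blast
qed

end
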